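(* Let $\mathcal{H}$ be a complex Hilbert space, let $W_1,W_2\in\mathcal{B}(\mathcal{H})$ be co-isometries and let $Q\in\mathcal{B}(\mathcal{H})$ be a unitary such that $W_2W_1=W_1W_2Q$. Then there exist a Hilbert space $\mathcal{K}\supseteq\mathcal{H}$ and unitaries $\overline{Q},U_1,U_2\in\mathcal{B}(\mathcal{K})$, with $\mathcal{H}$ reducing $\overline{Q}$ and $\overline{Q}|_{\mathcal{H}}=Q$, such that (i) $U_2U_1=U_1U_2\overline{Q}$; and (ii) $U_i$ is a lifting of $W_i$ for $i=1,2$, so that $W_1^nW_2^m=P_{\mathcal{H}}U_1^nU_2^m|_{\mathcal{H}}$ and $W_2^nW_1^m=P_{\mathcal{H}}U_2^nU_1^m|_{\mathcal{H}}$ for all integers $n,m\geq 0$. In fact, given any $q\in\mathbb{T}$, one can choose $\overline{Q}=Q\oplus qI_{\mathcal{K}\ominus\mathcal{H}}$.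
   Context: For $\mathcal{H}\subseteq\mathcal{K}$, $S\in\mathcal{B}(\mathcal{K})$ is a lifting of $T\in\mathcal{B}(\mathcal{H})$ if $S(\mathcal{H}^\perp)\subseteq\mathcal{H}^\perp$ and $T=P_{\mathcal{H}}S|_{\mathcal{H}}$ (equivalently $S^*|_{\mathcal{H}}=T^*$). A co-isometry is $W$ with $WW^*=I$. $\mathbb{T}$ is the unit circle; $P_{\mathcal{H}}$ the orthogonal projection onto $\mathcal{H}$. *)

theory Defs
  imports "HOL-Analysis.Analysis"
begin

(* The Isabelle distribution has no library of complex Hilbert spaces, and HOL
   cannot quantify existentially over types.  We therefore represent a complex
   Hilbert space as a carrier set inside some type, together with its
   operations; the inner product is conjugate-linear in the first and linear in
   the second argument. *)

record 'v chspace =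
  hcarrier :: "'v set"
  hadd     :: "'v \<Rightarrow> 'v \<Rightarrow> 'v"
  hzero    :: "'v"
  hscale   :: "complex \<Rightarrow> 'v \<Rightarrow> 'v"
  hinner   :: "'v \<Rightarrow> 'v \<Rightarrow> complex"

definition hdiff :: "('v, 'm) chspace_scheme \<Rightarrow> 'v \<Rightarrow> 'v \<Rightarrow> 'v" where
  "hdiff V x y = hadd V x (hscale V (-1) y)"

definition hnorm :: "('v, 'm) chspace_scheme \<Rightarrow> 'v \<Rightarrow> real" where
  "hnorm V x = sqrt (Re (hinner V x x))"

definition complex_hilbert_space :: "('v, 'm) chspace_scheme \<Rightarrow> bool" where
  "complex_hilbert_space V \<longleftrightarrow>
     (let C = hcarrier V in
       hzero V \<in> C \<and>
       (\<forall>x\<in>C. \<forall>y\<in>C. hadd V x y \<in> C) \<and>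
       (\<forall>a. \<forall>x\<in>C. hscale V a x \<in> C) \<and>
       (\<forall>x\<in>C. \<forall>y\<in>C. \<forall>z\<in>C. hadd V (hadd V x y) z = hadd V x (hadd V y z)) \<and>
       (\<forall>x\<in>C. \<forall>y\<in>C. hadd V x y = hadd V y x) \<and>
       (\<forall>x\<in>C. hadd V (hzero V) x = x) \<and>
       (\<forall>x\<in>C. hscale V 0 x = hzero V) \<and>
       (\<forall>x\<in>C. hscale V 1 x = x) \<and>
       (\<forall>a b. \<forall>x\<in>C. hscale V a (hscale V b x) = hscale V (a * b) x) \<and>
       (\<forall>a b. \<forall>x\<in>C. hscale V (a + b) x = hadd V (hscale V a x) (hscale V b x)) \<and>
       (\<forall>a. \<forall>x\<in>C. \<forall>y\<in>C. hscale V a (hadd V x y) = hadd V (hscale V a x) (hscale V a y)) \<and>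
       (\<forall>x\<in>C. \<forall>y\<in>C. hinner V x y = cnj (hinner V y x)) \<and>
       (\<forall>x\<in>C. \<forall>y\<in>C. \<forall>z\<in>C. hinner V x (hadd V y z) = hinner V x y + hinner V x z) \<and>
       (\<forall>a. \<forall>x\<in>C. \<forall>y\<in>C. hinner V x (hscale V a y) = a * hinner V x y) \<and>
       (\<forall>x\<in>C. Im (hinner V x x) = 0 \<and> Re (hinner V x x) \<ge> 0) \<and>
       (\<forall>x\<in>C. hinner V x x = 0 \<longrightarrow> x = hzero V) \<and>
       (\<forall>f :: nat \<Rightarrow> 'v. (\<forall>n. f n \<in> C) \<and>
           (\<forall>e>0. \<exists>N. \<forall>m\<ge>N. \<forall>n\<ge>N. hnorm V (hdiff V (f m) (f n)) < e)
           \<longrightarrow> (\<exists>l\<in>C. (\<lambda>n. hnorm V (hdiff V (f n) l)) \<longlonglongrightarrow> 0)))"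

definition bounded_op :: "('v, 'm) chspace_scheme \<Rightarrow> ('v \<Rightarrow> 'v) \<Rightarrow> bool" where
  "bounded_op V T \<longleftrightarrow>
     (\<forall>x\<in>hcarrier V. T x \<in> hcarrier V) \<and>
     (\<forall>x\<in>hcarrier V. \<forall>y\<in>hcarrier V. T (hadd V x y) = hadd V (T x) (T y)) \<and>
     (\<forall>a. \<forall>x\<in>hcarrier V. T (hscale V a x) = hscale V a (T x)) \<and>
     (\<exists>c. \<forall>x\<in>hcarrier V. hnorm V (T x) \<le> c * hnorm V x)"

definition is_adjoint :: "('v, 'm) chspace_scheme \<Rightarrow> ('v \<Rightarrow> 'v) \<Rightarrow> ('v \<Rightarrow> 'v) \<Rightarrow> bool" where
  "is_adjoint V T S \<longleftrightarrow> bounded_op V S \<and>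
     (\<forall>x\<in>hcarrier V. \<forall>y\<in>hcarrier V. hinner V (T x) y = hinner V x (S y))"

text \<open>The Hilbert-space adjoint T* (meaningful on the carrier).\<close>
definition hadjoint :: "('v, 'm) chspace_scheme \<Rightarrow> ('v \<Rightarrow> 'v) \<Rightarrow> ('v \<Rightarrow> 'v)" where
  "hadjoint V T = (SOME S. is_adjoint V T S)"

definition coisometry :: "('v, 'm) chspace_scheme \<Rightarrow> ('v \<Rightarrow> 'v) \<Rightarrow> bool" where
  "coisometry V W \<longleftrightarrow> bounded_op V W \<and> (\<forall>x\<in>hcarrier V. W (hadjoint V W x) = x)"

definition unitary_op :: "('v, 'm) chspace_scheme \<Rightarrow> ('v \<Rightarrow> 'v) \<Rightarrow> bool" where
  "unitary_op V U \<longleftrightarrow> bounded_op V U \<and>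
     (\<forall>x\<in>hcarrier V. U (hadjoint V U x) = x \<and> hadjoint V U (U x) = x)"

text \<open>J identifies H with a (closed) subspace of K: linear and inner-product preserving.\<close>
definition isometric_embedding ::
  "('a, 'm) chspace_scheme \<Rightarrow> ('b, 'n) chspace_scheme \<Rightarrow> ('a \<Rightarrow> 'b) \<Rightarrow> bool" where
  "isometric_embedding H K J \<longleftrightarrow>
     (\<forall>h\<in>hcarrier H. J h \<in> hcarrier K) \<and>
     (\<forall>x\<in>hcarrier H. \<forall>y\<in>hcarrier H. J (hadd H x y) = hadd K (J x) (J y)) \<and>
     (\<forall>a. \<forall>x\<in>hcarrier H. J (hscale H a x) = hscale K a (J x)) \<and>
     (\<forall>x\<in>hcarrier H. \<forall>y\<in>hcarrier H. hinner K (J x) (J y) = hinner H x y)"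

definition orth_to :: "('v, 'm) chspace_scheme \<Rightarrow> 'v set \<Rightarrow> 'v \<Rightarrow> bool" where
  "orth_to K M k \<longleftrightarrow> (\<forall>s\<in>M. hinner K s k = 0)"

definition reduces :: "('v, 'm) chspace_scheme \<Rightarrow> 'v set \<Rightarrow> ('v \<Rightarrow> 'v) \<Rightarrow> bool" where
  "reduces K M T \<longleftrightarrow> (\<forall>k\<in>M. T k \<in> M) \<and>
     (\<forall>k\<in>hcarrier K. orth_to K M k \<longrightarrow> orth_to K M (T k))"

text \<open>T = P_H S|_H (H identified with J(H)); since P_H S J h lies in J(H), this is
  equivalent to the stated equality of inner products against all of J(H).\<close>
definition compression ::
  "('a, 'm) chspace_scheme \<Rightarrow> ('b, 'n) chspace_scheme \<Rightarrow> ('a \<Rightarrow> 'b) \<Rightarrow> ('b \<Rightarrow> 'b) \<Rightarrow> ('a \<Rightarrow> 'a) \<Rightarrow> bool" where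
  "compression H K J S T \<longleftrightarrow>
     (\<forall>h\<in>hcarrier H. \<forall>h'\<in>hcarrier H. hinner K (J h') (S (J h)) = hinner H h' (T h))"

definition lifting ::
  "('a, 'm) chspace_scheme \<Rightarrow> ('b, 'n) chspace_scheme \<Rightarrow> ('a \<Rightarrow> 'b) \<Rightarrow> ('b \<Rightarrow> 'b) \<Rightarrow> ('a \<Rightarrow> 'a) \<Rightarrow> bool" where
  "lifting H K J S T \<longleftrightarrow>
     (\<forall>k\<in>hcarrier K. orth_to K (J ` hcarrier H) k \<longrightarrow> orth_to K (J ` hcarrier H) (S k)) \<and>
     compression H K J S T"

end

theory Submission
  imports Defs
begin

text \<open>
  Write \<open>V\<^sub>i = W\<^sub>i\<^sup>*\<close> and \<open>P\<^sub>i = I - V\<^sub>i W\<^sub>i\<close> for the projection onto \<open>ker W\<^sub>i\<close>. The dilation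
  space is \<open>K = H \<oplus> l\<^sup>2(ker W\<^sub>1) \<oplus> l\<^sup>2(ker W\<^sub>2)\<close>, and on \<open>f = (h, a, b)\<close> we put
  \<^item> \<open>U\<^sub>1 f = (W\<^sub>1 h, P\<^sub>1 y, W\<^sub>1 y)\<close> with \<open>y\<^sub>k = Q\<^sup>* (cnj q\<^sup>k b\<^sub>k + V\<^sub>2 \<alpha>\<^sub>k)\<close> and
    \<open>\<alpha> = (P\<^sub>1 h, cnj q a\<^sub>0, cnj q\<^sup>2 a\<^sub>1, \<dots>)\<close>,
  \<^item> \<open>U\<^sub>2 f = (W\<^sub>2 h, (q\<^sup>k W\<^sub>2 Q x\<^sub>k)\<^sub>k, (P\<^sub>2 h, P\<^sub>2 Q x\<^sub>0, q P\<^sub>2 Q x\<^sub>1, \<dots>))\<close> with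
    \<open>x\<^sub>k = a\<^sub>k + V\<^sub>1 b\<^sub>k\<close>,
  \<^item> \<open>Qbar = Q \<oplus> q I\<close>.

  The decompositions \<open>x = P\<^sub>i x + V\<^sub>i W\<^sub>i x\<close> are orthogonal, which makes \<open>U\<^sub>1\<close> and \<open>U\<^sub>2\<close> preserve
  inner products; both have explicit right inverses, hence are unitary. A direct computation shows
  that \<open>U\<^sub>2 U\<^sub>1\<close> and \<open>U\<^sub>1 U\<^sub>2 Qbar\<close> both equal the shift
  \<open>(h, a, b) \<mapsto> (W\<^sub>2 W\<^sub>1 h, (P\<^sub>1 h, a), (P\<^sub>2 W\<^sub>1 h, b))\<close>; the hypothesis \<open>W\<^sub>2 W\<^sub>1 = W\<^sub>1 W\<^sub>2 Q\<close>
  enters through the identity \<open>Q\<^sup>* (P\<^sub>2 Q h + V\<^sub>2 P\<^sub>1 W\<^sub>2 Q h) = P\<^sub>1 h + V\<^sub>1 P\<^sub>2 W\<^sub>1 h\<close>.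
  The \<open>H\<close>-component of \<open>U\<^sub>i f\<close> is \<open>W\<^sub>i\<close> applied to the \<open>H\<close>-component of \<open>f\<close>, so \<open>U\<^sub>i\<close> leaves
  the orthogonal complement of \<open>H\<close> invariant and every word in \<open>U\<^sub>1, U\<^sub>2\<close> compresses to the same word in \<open>W\<^sub>1, W\<^sub>2\<close>.

  Existence of the adjoints \<open>V\<^sub>i\<close> rests on the Riesz representation theorem, obtained from
  nearest points in closed subspaces.
\<close>

section \<open>Complex Hilbert spaces\<close>

abbreviation hcauchy :: "('v, 'm) chspace_scheme \<Rightarrow> (nat \<Rightarrow> 'v) \<Rightarrow> bool" where
  "hcauchy V f \<equiv> \<forall>e>0. \<exists>N. \<forall>m\<ge>N. \<forall>n\<ge>N. hnorm V (hdiff V (f m) (f n)) < e"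

abbreviation hconverges :: "('v, 'm) chspace_scheme \<Rightarrow> (nat \<Rightarrow> 'v) \<Rightarrow> 'v \<Rightarrow> bool" where
  "hconverges V f l \<equiv> (\<lambda>n. hnorm V (hdiff V (f n) l)) \<longlonglongrightarrow> 0"

locale chilbert =
  fixes V :: "('v, 'm) chspace_scheme"
  assumes zero_closed [simp]: "hzero V \<in> hcarrier V"
    and add_closed [simp]: "x \<in> hcarrier V \<Longrightarrow> y \<in> hcarrier V \<Longrightarrow> hadd V x y \<in> hcarrier V"
    and scale_closed [simp]: "x \<in> hcarrier V \<Longrightarrow> hscale V a x \<in> hcarrier V"
    and add_assoc: "x \<in> hcarrier V \<Longrightarrow> y \<in> hcarrier V \<Longrightarrow> z \<in> hcarrier V \<Longrightarrow>
      hadd V (hadd V x y) z = hadd V x (hadd V y z)"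
    and add_commute: "x \<in> hcarrier V \<Longrightarrow> y \<in> hcarrier V \<Longrightarrow> hadd V x y = hadd V y x"
    and add_zero_left [simp]: "x \<in> hcarrier V \<Longrightarrow> hadd V (hzero V) x = x"
    and scale_zero_left [simp]: "x \<in> hcarrier V \<Longrightarrow> hscale V 0 x = hzero V"
    and scale_one [simp]: "x \<in> hcarrier V \<Longrightarrow> hscale V 1 x = x"
    and scale_scale [simp]: "x \<in> hcarrier V \<Longrightarrow> hscale V a (hscale V b x) = hscale V (a * b) x"
    and scale_left_distrib: "x \<in> hcarrier V \<Longrightarrow>
      hscale V (a + b) x = hadd V (hscale V a x) (hscale V b x)"
    and scale_right_distrib: "x \<in> hcarrier V \<Longrightarrow> y \<in> hcarrier V \<Longrightarrow>
      hscale V a (hadd V x y) = hadd V (hscale V a x) (hscale V a y)"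
    and inner_commute: "x \<in> hcarrier V \<Longrightarrow> y \<in> hcarrier V \<Longrightarrow> hinner V x y = cnj (hinner V y x)"
    and inner_add_right [simp]: "x \<in> hcarrier V \<Longrightarrow> y \<in> hcarrier V \<Longrightarrow> z \<in> hcarrier V \<Longrightarrow>
      hinner V x (hadd V y z) = hinner V x y + hinner V x z"
    and inner_scale_right [simp]: "x \<in> hcarrier V \<Longrightarrow> y \<in> hcarrier V \<Longrightarrow>
      hinner V x (hscale V a y) = a * hinner V x y"
    and inner_self_real: "x \<in> hcarrier V \<Longrightarrow> Im (hinner V x x) = 0"
    and inner_self_nonneg: "x \<in> hcarrier V \<Longrightarrow> 0 \<le> Re (hinner V x x)"
    and inner_self_eq_zero: "x \<in> hcarrier V \<Longrightarrow> hinner V x x = 0 \<Longrightarrow> x = hzero V"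
    and complete: "(\<And>n. f n \<in> hcarrier V) \<Longrightarrow> hcauchy V f \<Longrightarrow> \<exists>l\<in>hcarrier V. hconverges V f l"

lemma complex_hilbert_space_iff_chilbert: "complex_hilbert_space V \<longleftrightarrow> chilbert V"
proof
  assume hilbert: "complex_hilbert_space V"
  have complete: "\<forall>f. (\<forall>n. f n \<in> hcarrier V) \<and> hcauchy V f \<longrightarrow> (\<exists>l\<in>hcarrier V. hconverges V f l)"
    using hilbert unfolding complex_hilbert_space_def Let_def by (elim conjE) assumption
  show "chilbert V"
  proof unfold_locales
    show "\<exists>l\<in>hcarrier V. hconverges V f l" if "\<And>n. f n \<in> hcarrier V" "hcauchy V f" for f
      using complete that by blast
  qed (use hilbert[unfolded complex_hilbert_space_def Let_def] in meson)+
next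
  assume "chilbert V"
  then interpret chilbert V .
  show "complex_hilbert_space V"
    unfolding complex_hilbert_space_def Let_def
    by (intro conjI ballI allI impI; (elim conjE)?;
        ((rule zero_closed add_closed scale_closed add_assoc add_commute add_zero_left
          scale_zero_left scale_one scale_scale scale_left_distrib scale_right_distrib
          inner_commute inner_add_right inner_scale_right inner_self_real inner_self_nonneg
          inner_self_eq_zero; assumption) | (rule complete; blast)))
qed

context chilbert
begin

lemma diff_closed [simp]: "x \<in> hcarrier V \<Longrightarrow> y \<in> hcarrier V \<Longrightarrow> hdiff V x y \<in> hcarrier V"
  by (simp add: hdiff_def)

lemma inner_add_left [simp]: "x \<in> hcarrier V \<Longrightarrow> y \<in> hcarrier V \<Longrightarrow> z \<in> hcarrier V \<Longrightarrow>
    hinner V (hadd V y z) x = hinner V y x + hinner V z x"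
  by (subst inner_commute) (auto simp: inner_commute[of x y] inner_commute[of x z])

lemma inner_scale_left [simp]: "x \<in> hcarrier V \<Longrightarrow> y \<in> hcarrier V \<Longrightarrow>
    hinner V (hscale V a y) x = cnj a * hinner V y x"
  by (subst inner_commute) (auto simp: inner_commute[of x y])

lemma inner_diff_right [simp]: "x \<in> hcarrier V \<Longrightarrow> y \<in> hcarrier V \<Longrightarrow> z \<in> hcarrier V \<Longrightarrow>
    hinner V x (hdiff V y z) = hinner V x y - hinner V x z"
  by (simp add: hdiff_def)

lemma inner_diff_left [simp]: "x \<in> hcarrier V \<Longrightarrow> y \<in> hcarrier V \<Longrightarrow> z \<in> hcarrier V \<Longrightarrow>
    hinner V (hdiff V y z) x = hinner V y x - hinner V z x"
  by (simp add: hdiff_def)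

lemma inner_zero_right [simp]: "x \<in> hcarrier V \<Longrightarrow> hinner V x (hzero V) = 0"
  using inner_scale_right[of x x 0] by simp

lemma inner_zero_left [simp]: "x \<in> hcarrier V \<Longrightarrow> hinner V (hzero V) x = 0"
  by (subst inner_commute) auto

text \<open>Testing against all vectors turns identities between vectors into identities between
  complex numbers; most vector identities below are proved this way.\<close>

lemma vector_eqI:
  assumes x: "x \<in> hcarrier V" and y: "y \<in> hcarrier V"
    and eq: "\<And>z. z \<in> hcarrier V \<Longrightarrow> hinner V z x = hinner V z y"
  shows "x = y"
proof -
  let ?d = "hdiff V x y"
  have "hinner V ?d ?d = 0" using eq[of ?d] x y by simp
  then have d0: "?d = hzero V" using inner_self_eq_zero x y by simp
  have "x = hadd V (hzero V) x" using add_zero_left x by simp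
  also have "\<dots> = hadd V (hadd V (hscale V (-1) y) (hscale V 1 y)) x"
    using scale_left_distrib[OF y, of "-1" 1] y by simp
  also have "\<dots> = hadd V y ?d"
    using x y add_assoc add_commute by (simp add: hdiff_def)
  also have "\<dots> = y" using d0 add_commute[of y "hzero V"] add_zero_left y by simp
  finally show ?thesis .
qed

lemma add_zero_right [simp]: "x \<in> hcarrier V \<Longrightarrow> hadd V x (hzero V) = x"
  by (intro vector_eqI) auto

lemma scale_zero_right [simp]: "hscale V a (hzero V) = hzero V"
  by (intro vector_eqI) auto

lemma diff_self [simp]: "x \<in> hcarrier V \<Longrightarrow> hdiff V x x = hzero V"
  by (intro vector_eqI) auto

lemma inner_self_norm: "x \<in> hcarrier V \<Longrightarrow> hinner V x x = of_real ((hnorm V x)\<^sup>2)"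
  using inner_self_real[of x] inner_self_nonneg[of x] by (simp add: hnorm_def complex_eq_iff)

lemma norm_sq: "x \<in> hcarrier V \<Longrightarrow> (hnorm V x)\<^sup>2 = Re (hinner V x x)"
  by (simp add: inner_self_norm)

lemma norm_nonneg [simp]: "x \<in> hcarrier V \<Longrightarrow> 0 \<le> hnorm V x"
  using inner_self_nonneg[of x] by (simp add: hnorm_def)

lemma norm_eq_zero_iff: "x \<in> hcarrier V \<Longrightarrow> hnorm V x = 0 \<longleftrightarrow> x = hzero V"
  using inner_self_eq_zero[of x] inner_self_norm[of x] by auto

lemma norm_zero [simp]: "hnorm V (hzero V) = 0"
  using norm_eq_zero_iff by simp

lemma norm_scale:
  assumes x: "x \<in> hcarrier V"
  shows "hnorm V (hscale V a x) = cmod a * hnorm V x"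
proof -
  have "cnj a * a = of_real ((cmod a)\<^sup>2)" "a * cnj a = of_real ((cmod a)\<^sup>2)"
    by (metis complex_norm_square mult.commute)+
  then have "hinner V (hscale V a x) (hscale V a x) = of_real ((cmod a * hnorm V x)\<^sup>2)"
    using x by (simp add: inner_self_norm[of x] mult.assoc[symmetric] power_mult_distrib)
  then have "(hnorm V (hscale V a x))\<^sup>2 = (cmod a * hnorm V x)\<^sup>2"
    using x by (simp add: norm_sq)
  then show ?thesis using x by (simp add: power2_eq_iff_nonneg)
qed

lemma norm_diff_commute:
  assumes "x \<in> hcarrier V" "y \<in> hcarrier V"
  shows "hnorm V (hdiff V x y) = hnorm V (hdiff V y x)"
proof -
  have "hdiff V y x = hscale V (-1) (hdiff V x y)"
    using assms by (intro vector_eqI) (auto simp: algebra_simps)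
  then show ?thesis using assms by (simp add: norm_scale)
qed

lemma norm_diff_projection:
  assumes x: "x \<in> hcarrier V" and y: "y \<in> hcarrier V" and y0: "y \<noteq> hzero V"
  defines "t \<equiv> hinner V y x / of_real ((hnorm V y)\<^sup>2)"
  shows "(hnorm V (hdiff V x (hscale V t y)))\<^sup>2 = (hnorm V x)\<^sup>2 - (cmod (hinner V y x))\<^sup>2 / (hnorm V y)\<^sup>2"
proof -
  let ?c = "hinner V y x" and ?b = "(hnorm V y)\<^sup>2" and ?w = "hdiff V x (hscale V t y)"
  have b: "?b > 0" using y y0 norm_eq_zero_iff by simp
  have "hinner V ?w ?w = hinner V x x - t * cnj ?c - cnj t * ?c + cnj t * t * of_real ?b"
    using x y by (simp add: inner_self_norm[of y] inner_commute[of x y] algebra_simps)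
  also have "\<dots> = hinner V x x - ?c * cnj ?c / of_real ?b"
    using b by (simp add: t_def field_simps)
  also have "?c * cnj ?c = of_real ((cmod ?c)\<^sup>2)"
    by (rule complex_norm_square[symmetric])
  finally have "hinner V ?w ?w = hinner V x x - of_real ((cmod ?c)\<^sup>2) / of_real ?b" .
  then show ?thesis
    unfolding norm_sq[of ?w, OF diff_closed[OF x scale_closed[OF y]]] by (simp add: norm_sq[OF x])
qed

lemma cauchy_schwarz:
  assumes x: "x \<in> hcarrier V" and y: "y \<in> hcarrier V"
  shows "cmod (hinner V x y) \<le> hnorm V x * hnorm V y"
proof (cases "y = hzero V")
  case False
  have b: "(hnorm V y)\<^sup>2 > 0" using y False norm_eq_zero_iff by simp
  have "(cmod (hinner V y x))\<^sup>2 / (hnorm V y)\<^sup>2 \<le> (hnorm V x)\<^sup>2"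
    using norm_diff_projection[OF x y False]
    by (metis diff_ge_0_iff_ge zero_le_power2)
  then have "(cmod (hinner V x y))\<^sup>2 \<le> (hnorm V x * hnorm V y)\<^sup>2"
    using b by (simp add: inner_commute[OF x y] field_simps power_mult_distrib)
  then show ?thesis by (rule power2_le_imp_le) (use x y in simp)
qed (use x in simp)

lemma norm_triangle:
  assumes x: "x \<in> hcarrier V" and y: "y \<in> hcarrier V"
  shows "hnorm V (hadd V x y) \<le> hnorm V x + hnorm V y"
proof -
  have "(hnorm V (hadd V x y))\<^sup>2 = (hnorm V x)\<^sup>2 + (hnorm V y)\<^sup>2 + 2 * Re (hinner V x y)"
    using x y by (simp add: norm_sq inner_commute[of y x])
  also have "Re (hinner V x y) \<le> hnorm V x * hnorm V y"
    using complex_Re_le_cmod cauchy_schwarz[OF x y] by (rule order_trans)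
  finally have "(hnorm V (hadd V x y))\<^sup>2 \<le> (hnorm V x + hnorm V y)\<^sup>2"
    by (simp add: power2_sum)
  then show ?thesis by (rule power2_le_imp_le) (use x y in simp)
qed

lemma norm_diff_triangle:
  assumes "x \<in> hcarrier V" "y \<in> hcarrier V" "z \<in> hcarrier V"
  shows "hnorm V (hdiff V x z) \<le> hnorm V (hdiff V x y) + hnorm V (hdiff V y z)"
proof -
  have "hdiff V x z = hadd V (hdiff V x y) (hdiff V y z)"
    using assms by (intro vector_eqI) auto
  then show ?thesis using assms norm_triangle by simp
qed

lemma parallelogram:
  assumes x: "x \<in> hcarrier V" and y: "y \<in> hcarrier V"
  shows "(hnorm V (hdiff V x y))\<^sup>2 + (hnorm V (hadd V x y))\<^sup>2 = 2 * (hnorm V x)\<^sup>2 + 2 * (hnorm V y)\<^sup>2"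
proof -
  have "hinner V (hdiff V x y) (hdiff V x y) + hinner V (hadd V x y) (hadd V x y)
      = 2 * hinner V x x + 2 * hinner V y y"
    using x y by (simp add: algebra_simps)
  from arg_cong[OF this, of Re] show ?thesis using x y by (simp add: norm_sq)
qed

lemma hconverges_norm_diff:
  assumes "hconverges V f l" "\<And>n. f n \<in> hcarrier V" "l \<in> hcarrier V" "x \<in> hcarrier V"
  shows "(\<lambda>n. hnorm V (hdiff V x (f n))) \<longlonglongrightarrow> hnorm V (hdiff V x l)"
proof -
  have "\<bar>hnorm V (hdiff V x (f n)) - hnorm V (hdiff V x l)\<bar> \<le> hnorm V (hdiff V (f n) l)" for n
    using assms(2-4) norm_diff_triangle[of x "f n" l] norm_diff_triangle[of x l "f n"]
      norm_diff_commute[of "f n" l] by simp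
  then have "(\<lambda>n. hnorm V (hdiff V x (f n)) - hnorm V (hdiff V x l)) \<longlonglongrightarrow> 0"
    by (intro Lim_null_comparison[OF always_eventually assms(1)]) simp
  then show ?thesis by (rule LIM_zero_cancel)
qed

lemma hcauchyI:
  assumes bound: "\<And>m n. (hnorm V (hdiff V (f m) (f n)))\<^sup>2 \<le> e m + e n" and e: "e \<longlonglongrightarrow> 0"
  shows "hcauchy V f"
proof (intro allI impI)
  fix \<epsilon> :: real assume \<epsilon>: "\<epsilon> > 0"
  then have "\<epsilon>\<^sup>2 / 2 > 0" by simp
  from order_tendstoD(2)[OF e this] obtain N where N: "\<And>k. k \<ge> N \<Longrightarrow> e k < \<epsilon>\<^sup>2 / 2"
    unfolding eventually_sequentially by blast
  have "hnorm V (hdiff V (f m) (f n)) < \<epsilon>" if "m \<ge> N" "n \<ge> N" for m n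
  proof (rule power2_less_imp_less)
    show "(hnorm V (hdiff V (f m) (f n)))\<^sup>2 < \<epsilon>\<^sup>2"
      using bound[of m n] N[OF that(1)] N[OF that(2)] by linarith
  qed (use \<epsilon> in simp)
  then show "\<exists>N. \<forall>m\<ge>N. \<forall>n\<ge>N. hnorm V (hdiff V (f m) (f n)) < \<epsilon>" by blast
qed

end

section \<open>Riesz representation and adjoints\<close>

definition closed_subspace :: "('v, 'm) chspace_scheme \<Rightarrow> 'v set \<Rightarrow> bool" where
  "closed_subspace V N \<longleftrightarrow> N \<subseteq> hcarrier V \<and> hzero V \<in> N \<and>
     (\<forall>x\<in>N. \<forall>y\<in>N. hadd V x y \<in> N) \<and> (\<forall>a. \<forall>x\<in>N. hscale V a x \<in> N) \<and>
     (\<forall>f l. (\<forall>n. f n \<in> N) \<longrightarrow> l \<in> hcarrier V \<longrightarrow> hconverges V f l \<longrightarrow> l \<in> N)"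

lemma closed_subspaceD:
  assumes "closed_subspace V N"
  shows "N \<subseteq> hcarrier V" "hzero V \<in> N"
    and "\<And>x y. x \<in> N \<Longrightarrow> y \<in> N \<Longrightarrow> hadd V x y \<in> N"
    and "\<And>a x. x \<in> N \<Longrightarrow> hscale V a x \<in> N"
    and "\<And>f l. (\<And>n. f n \<in> N) \<Longrightarrow> l \<in> hcarrier V \<Longrightarrow> hconverges V f l \<Longrightarrow> l \<in> N"
  using assms unfolding closed_subspace_def by blast+

context chilbert
begin

lemma parallelogram_midpoint:
  assumes u: "u \<in> hcarrier V" and x: "x \<in> hcarrier V" and y: "y \<in> hcarrier V"
    and d: "d \<le> hnorm V (hdiff V u (hscale V (1/2) (hadd V x y)))" "0 \<le> d"
  shows "(hnorm V (hdiff V x y))\<^sup>2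
    \<le> 2 * (hnorm V (hdiff V u x))\<^sup>2 + 2 * (hnorm V (hdiff V u y))\<^sup>2 - 4 * d\<^sup>2"
proof -
  let ?a = "hdiff V u x" and ?b = "hdiff V u y" and ?m = "hscale V (1/2) (hadd V x y)"
  have "hdiff V ?a ?b = hdiff V y x" "hadd V ?a ?b = hscale V 2 (hdiff V u ?m)"
    using u x y by (auto intro!: vector_eqI simp: algebra_simps)
  then have "hnorm V (hdiff V ?a ?b) = hnorm V (hdiff V x y)"
    and "hnorm V (hadd V ?a ?b) = 2 * hnorm V (hdiff V u ?m)"
    using u x y by (simp_all add: norm_scale norm_diff_commute)
  moreover have "(2 * d)\<^sup>2 \<le> (2 * hnorm V (hdiff V u ?m))\<^sup>2"
    using d by (intro power_mono) auto
  ultimately show ?thesis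
    using parallelogram[of ?a ?b] u x y by (simp add: power_mult_distrib)
qed

lemma minimizing_sequence_cauchy:
  assumes N: "closed_subspace V N" and u: "u \<in> hcarrier V"
    and d_le: "\<And>n. n \<in> N \<Longrightarrow> d \<le> hnorm V (hdiff V u n)" and d0: "0 \<le> d"
    and ns: "\<And>k. ns k \<in> N" and ns_close: "\<And>k. hnorm V (hdiff V u (ns k)) < d + inverse (real (Suc k))"
  shows "hcauchy V ns"
proof (rule hcauchyI)
  have nsC: "ns k \<in> hcarrier V" for k using ns closed_subspaceD(1)[OF N] by blast
  define e where "e k = 2 * ((2 * d + 1) * inverse (real (Suc k)))" for k
  have ns_sq: "2 * (hnorm V (hdiff V u (ns k)))\<^sup>2 \<le> 2 * d\<^sup>2 + e k" for k
  proof -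
    let ?\<epsilon> = "inverse (real (Suc k))"
    have "0 \<le> ?\<epsilon>" "?\<epsilon> \<le> 1" by (auto simp: field_simps)
    then have "(d + ?\<epsilon>)\<^sup>2 \<le> d\<^sup>2 + (2 * d + 1) * ?\<epsilon>"
      using d0 by (simp add: power2_sum algebra_simps power2_eq_square mult_left_le_one_le)
    moreover have "(hnorm V (hdiff V u (ns k)))\<^sup>2 \<le> (d + ?\<epsilon>)\<^sup>2"
      using ns_close[of k] u nsC by (intro power_mono) auto
    ultimately show ?thesis unfolding e_def by linarith
  qed
  fix m n
  have "hscale V (1/2) (hadd V (ns m) (ns n)) \<in> N"
    using ns closed_subspaceD(3,4)[OF N] by blast
  then show "(hnorm V (hdiff V (ns m) (ns n)))\<^sup>2 \<le> e m + e n"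
    using parallelogram_midpoint[OF u nsC[of m] nsC[of n] d_le d0] ns_sq[of m] ns_sq[of n]
    by linarith
next
  show "(\<lambda>k. 2 * ((2 * d + 1) * inverse (real (Suc k)))) \<longlonglongrightarrow> 0"
    by (intro tendsto_mult_right_zero LIMSEQ_inverse_real_of_nat)
qed

lemma nearest_point_exists:
  assumes N: "closed_subspace V N" and u: "u \<in> hcarrier V"
  shows "\<exists>l\<in>N. \<forall>n\<in>N. hnorm V (hdiff V u l) \<le> hnorm V (hdiff V u n)"
proof -
  note NC = closed_subspaceD(1)[OF N] and N0 = closed_subspaceD(2)[OF N]
  define d where "d = (INF n\<in>N. hnorm V (hdiff V u n))"
  have bdd: "bdd_below ((\<lambda>n. hnorm V (hdiff V u n)) ` N)"
    using NC u by (intro bdd_belowI2[where m = 0]) auto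
  have d_le: "d \<le> hnorm V (hdiff V u n)" if "n \<in> N" for n
    unfolding d_def using bdd that by (rule cINF_lower)
  have d0: "0 \<le> d"
    unfolding d_def using N0 NC u by (intro cINF_greatest) auto
  have "\<exists>n\<in>N. hnorm V (hdiff V u n) < d + inverse (real (Suc k))" for k
    using cINF_less_iff[OF _ bdd, of "d + inverse (real (Suc k))"] N0 by (auto simp: d_def)
  then obtain ns where ns: "\<And>k. ns k \<in> N"
    and ns_close: "\<And>k. hnorm V (hdiff V u (ns k)) < d + inverse (real (Suc k))"
    by metis
  have nsC: "ns k \<in> hcarrier V" for k using ns NC by blast
  obtain l where lC: "l \<in> hcarrier V" and lim: "hconverges V ns l"
    using complete nsC minimizing_sequence_cauchy[OF N u d_le d0 ns ns_close] by blast
  have "hnorm V (hdiff V u l) \<le> d"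
  proof (rule tendsto_le[OF trivial_limit_sequentially])
    show "(\<lambda>k. hnorm V (hdiff V u (ns k))) \<longlonglongrightarrow> hnorm V (hdiff V u l)"
      using hconverges_norm_diff[OF lim nsC lC u] .
    show "(\<lambda>k. d + inverse (real (Suc k))) \<longlonglongrightarrow> d"
      by (rule LIMSEQ_inverse_real_of_nat_add)
  qed (intro always_eventually allI less_imp_le ns_close)
  then show ?thesis using closed_subspaceD(5)[OF N ns lC lim] d_le by force
qed

lemma nearest_point_orthogonal:
  assumes N: "closed_subspace V N" and u: "u \<in> hcarrier V" and l: "l \<in> N"
    and nearest: "\<And>n. n \<in> N \<Longrightarrow> hnorm V (hdiff V u l) \<le> hnorm V (hdiff V u n)"
    and n: "n \<in> N"
  shows "hinner V n (hdiff V u l) = 0"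
proof (rule ccontr)
  let ?v = "hdiff V u l"
  let ?t = "hinner V n ?v / of_real ((hnorm V n)\<^sup>2)"
  assume ne: "hinner V n ?v \<noteq> 0"
  have lC: "l \<in> hcarrier V" and nC: "n \<in> hcarrier V"
    using N l n unfolding closed_subspace_def by auto
  have n0: "n \<noteq> hzero V" using ne u lC by auto
  have "hadd V l (hscale V ?t n) \<in> N"
    using N l n unfolding closed_subspace_def by blast
  moreover have "hdiff V u (hadd V l (hscale V ?t n)) = hdiff V ?v (hscale V ?t n)"
    using u lC nC by (intro vector_eqI) auto
  ultimately have "(hnorm V ?v)\<^sup>2 \<le> (hnorm V (hdiff V ?v (hscale V ?t n)))\<^sup>2"
    using nearest u lC by (metis diff_closed norm_nonneg power_mono)
  also have "\<dots> = (hnorm V ?v)\<^sup>2 - (cmod (hinner V n ?v))\<^sup>2 / (hnorm V n)\<^sup>2"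
    using norm_diff_projection[OF _ nC n0] u lC by simp
  finally have "(cmod (hinner V n ?v))\<^sup>2 / (hnorm V n)\<^sup>2 \<le> 0" by simp
  moreover have "(hnorm V n)\<^sup>2 > 0" using nC n0 norm_eq_zero_iff by simp
  ultimately show False using ne by (simp add: divide_le_0_iff)
qed

lemma closed_subspace_kernel:
  fixes \<phi> :: "'v \<Rightarrow> complex"
  assumes add: "\<And>x y. x \<in> hcarrier V \<Longrightarrow> y \<in> hcarrier V \<Longrightarrow> \<phi> (hadd V x y) = \<phi> x + \<phi> y"
    and scale: "\<And>a x. x \<in> hcarrier V \<Longrightarrow> \<phi> (hscale V a x) = a * \<phi> x"
    and bound: "\<And>x. x \<in> hcarrier V \<Longrightarrow> cmod (\<phi> x) \<le> c * hnorm V x"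
  shows "closed_subspace V {x \<in> hcarrier V. \<phi> x = 0}"
  unfolding closed_subspace_def
proof (intro conjI ballI allI impI)
  fix f l assume f: "\<forall>n. f n \<in> {x \<in> hcarrier V. \<phi> x = 0}" and l: "l \<in> hcarrier V"
    and lim: "hconverges V f l"
  have "cmod (\<phi> l) \<le> c * hnorm V (hdiff V (f n) l)" for n
  proof -
    have "\<phi> (hdiff V (f n) l) = - \<phi> l"
      using f l add scale by (simp add: hdiff_def)
    then show ?thesis using bound[of "hdiff V (f n) l"] f l by simp
  qed
  moreover have "(\<lambda>n. c * hnorm V (hdiff V (f n) l)) \<longlonglongrightarrow> 0"
    using tendsto_mult_right_zero[OF lim] .
  ultimately have "cmod (\<phi> l) \<le> 0"
    by (intro tendsto_lowerbound[OF _ _ trivial_limit_sequentially]) auto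
  then show "l \<in> {x \<in> hcarrier V. \<phi> x = 0}" using l by simp
qed (use add scale scale[of "hzero V" 0] in auto)

lemma riesz_representation:
  fixes \<phi> :: "'v \<Rightarrow> complex"
  assumes add: "\<And>x y. x \<in> hcarrier V \<Longrightarrow> y \<in> hcarrier V \<Longrightarrow> \<phi> (hadd V x y) = \<phi> x + \<phi> y"
    and scale: "\<And>a x. x \<in> hcarrier V \<Longrightarrow> \<phi> (hscale V a x) = a * \<phi> x"
    and bound: "\<And>x. x \<in> hcarrier V \<Longrightarrow> cmod (\<phi> x) \<le> c * hnorm V x"
  shows "\<exists>z\<in>hcarrier V. \<forall>x\<in>hcarrier V. \<phi> x = hinner V z x"
proof (cases "\<forall>x\<in>hcarrier V. \<phi> x = 0")
  case False
  then obtain u where u: "u \<in> hcarrier V" and \<phi>u: "\<phi> u \<noteq> 0" by blast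
  have \<phi>_diff: "\<phi> (hdiff V x y) = \<phi> x - \<phi> y" if "x \<in> hcarrier V" "y \<in> hcarrier V" for x y
    using that add scale by (simp add: hdiff_def)
  let ?N = "{x \<in> hcarrier V. \<phi> x = 0}"
  have N: "closed_subspace V ?N" using closed_subspace_kernel[OF add scale bound] .
  then obtain l where l: "l \<in> ?N" and nearest: "\<forall>n\<in>?N. hnorm V (hdiff V u l) \<le> hnorm V (hdiff V u n)"
    using nearest_point_exists u by blast
  define v where "v = hdiff V u l"
  have vC: "v \<in> hcarrier V" and \<phi>v: "\<phi> v = \<phi> u" using u l \<phi>_diff by (auto simp: v_def)
  have orth: "hinner V n v = 0" if "n \<in> ?N" for n
    unfolding v_def using nearest_point_orthogonal[OF N u l _ that] nearest by blast
  have v0: "hnorm V v \<noteq> 0" using vC \<phi>v \<phi>u scale[of "hzero V" 0] norm_eq_zero_iff by auto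
  define z where "z = hscale V (cnj (\<phi> v) / of_real ((hnorm V v)\<^sup>2)) v"
  show ?thesis
  proof (intro bexI ballI)
    fix x assume x: "x \<in> hcarrier V"
    have "hdiff V x (hscale V (\<phi> x / \<phi> v) v) \<in> ?N"
      using x vC \<phi>u \<phi>v \<phi>_diff scale by simp
    then have "hinner V (hdiff V x (hscale V (\<phi> x / \<phi> v) v)) v = 0" by (rule orth)
    then have "hinner V x v = cnj (\<phi> x / \<phi> v) * of_real ((hnorm V v)\<^sup>2)"
      using x vC by (simp add: inner_self_norm)
    then have "hinner V v x = \<phi> x / \<phi> v * of_real ((hnorm V v)\<^sup>2)"
      using inner_commute[OF vC x] by simp
    then show "\<phi> x = hinner V z x"
      using x vC v0 \<phi>u \<phi>v by (simp add: z_def field_simps)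
  qed (use vC in \<open>simp add: z_def\<close>)
qed (auto intro!: bexI[of _ "hzero V"])

lemma bounded_op_linear:
  assumes T: "bounded_op V T"
  shows bounded_op_closed: "x \<in> hcarrier V \<Longrightarrow> T x \<in> hcarrier V"
    and bounded_op_add: "x \<in> hcarrier V \<Longrightarrow> y \<in> hcarrier V \<Longrightarrow> T (hadd V x y) = hadd V (T x) (T y)"
    and bounded_op_scale: "x \<in> hcarrier V \<Longrightarrow> T (hscale V a x) = hscale V a (T x)"
    and bounded_op_diff: "x \<in> hcarrier V \<Longrightarrow> y \<in> hcarrier V \<Longrightarrow> T (hdiff V x y) = hdiff V (T x) (T y)"
    and bounded_op_zero: "T (hzero V) = hzero V"
proof -
  show closed: "x \<in> hcarrier V \<Longrightarrow> T x \<in> hcarrier V"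
    and add: "x \<in> hcarrier V \<Longrightarrow> y \<in> hcarrier V \<Longrightarrow> T (hadd V x y) = hadd V (T x) (T y)"
    and scale: "x \<in> hcarrier V \<Longrightarrow> T (hscale V a x) = hscale V a (T x)" for x y a
    using T unfolding bounded_op_def by blast+
  show "x \<in> hcarrier V \<Longrightarrow> y \<in> hcarrier V \<Longrightarrow> T (hdiff V x y) = hdiff V (T x) (T y)"
    by (simp add: hdiff_def add scale)
  show "T (hzero V) = hzero V"
    using scale[of "hzero V" 0] closed[of "hzero V"] by simp
qed

lemma adjoint_inner_left:
  assumes T: "bounded_op V T" and S: "is_adjoint V T S"
    and x: "x \<in> hcarrier V" and y: "y \<in> hcarrier V"
  shows "hinner V (S x) y = hinner V x (T y)"
proof -
  have Sx: "S x \<in> hcarrier V" using S x unfolding is_adjoint_def bounded_op_def by blast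
  have "hinner V (S x) y = cnj (hinner V y (S x))" by (rule inner_commute[OF Sx y])
  also have "\<dots> = cnj (hinner V (T y) x)" using S x y unfolding is_adjoint_def by simp
  also have "\<dots> = hinner V x (T y)" using inner_commute[OF x bounded_op_closed[OF T y]] by simp
  finally show ?thesis .
qed

lemma bounded_op_kernel_closed:
  assumes T: "bounded_op V T" and f: "\<And>n. f n \<in> hcarrier V" and l: "l \<in> hcarrier V"
    and lim: "hconverges V f l" and ker: "\<And>n. T (f n) = hzero V"
  shows "T l = hzero V"
proof -
  obtain c where c: "\<And>x. x \<in> hcarrier V \<Longrightarrow> hnorm V (T x) \<le> c * hnorm V x"
    using T unfolding bounded_op_def by blast
  have "T (hdiff V (f n) l) = hscale V (-1) (T l)" for n
    using bounded_op_linear[OF T] f l ker by (intro vector_eqI) simp_all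
  then have "hnorm V (T l) = hnorm V (T (hdiff V (f n) l))" for n
    using bounded_op_closed[OF T l] by (simp add: norm_scale)
  then have "hnorm V (T l) \<le> c * hnorm V (hdiff V (f n) l)" for n
    using c[of "hdiff V (f n) l"] f l by simp
  moreover have "(\<lambda>n. c * hnorm V (hdiff V (f n) l)) \<longlonglongrightarrow> 0"
    using tendsto_mult_right_zero[OF lim] .
  ultimately have "hnorm V (T l) \<le> 0"
    by (intro tendsto_lowerbound[OF _ _ trivial_limit_sequentially]) auto
  then show ?thesis
    using norm_eq_zero_iff norm_nonneg bounded_op_closed[OF T l] by (meson order_antisym)
qed

lemma adjoint_norm_bound:
  assumes T: "bounded_op V T" and c: "\<And>x. x \<in> hcarrier V \<Longrightarrow> hnorm V (T x) \<le> c * hnorm V x"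
    and S: "\<And>y. y \<in> hcarrier V \<Longrightarrow> S y \<in> hcarrier V"
    and adj: "\<And>x y. x \<in> hcarrier V \<Longrightarrow> y \<in> hcarrier V \<Longrightarrow> hinner V (T x) y = hinner V x (S y)"
    and y: "y \<in> hcarrier V"
  shows "hnorm V (S y) \<le> \<bar>c\<bar> * hnorm V y"
proof -
  have Sy: "S y \<in> hcarrier V" using S y .
  have "(hnorm V (S y))\<^sup>2 = Re (hinner V (T (S y)) y)"
    using adj[OF Sy y] Sy by (simp add: norm_sq)
  also have "\<dots> \<le> hnorm V (T (S y)) * hnorm V y"
    using complex_Re_le_cmod cauchy_schwarz[OF bounded_op_closed[OF T Sy] y] by (rule order_trans)
  also have "\<dots> \<le> (\<bar>c\<bar> * hnorm V (S y)) * hnorm V y"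
    using c[OF Sy] mult_right_mono[OF abs_ge_self norm_nonneg[OF Sy], of c] y
    by (intro mult_right_mono) auto
  finally have le: "hnorm V (S y) * hnorm V (S y) \<le> hnorm V (S y) * (\<bar>c\<bar> * hnorm V y)"
    by (simp add: power2_eq_square algebra_simps)
  show ?thesis
  proof (cases "hnorm V (S y) = 0")
    case False
    then have "hnorm V (S y) > 0" using norm_nonneg[OF Sy] by linarith
    then show ?thesis using le by (simp add: mult_le_cancel_left_pos)
  qed (use y in simp)
qed

lemma is_adjointI:
  assumes T: "bounded_op V T" and S: "\<And>y. y \<in> hcarrier V \<Longrightarrow> S y \<in> hcarrier V"
    and adj: "\<And>x y. x \<in> hcarrier V \<Longrightarrow> y \<in> hcarrier V \<Longrightarrow> hinner V (T x) y = hinner V x (S y)"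
  shows "is_adjoint V T S"
proof -
  obtain c where c: "\<And>x. x \<in> hcarrier V \<Longrightarrow> hnorm V (T x) \<le> c * hnorm V x"
    using T unfolding bounded_op_def by blast
  have "bounded_op V S"
    unfolding bounded_op_def
  proof (intro conjI ballI allI exI)
    show "S (hadd V x y) = hadd V (S x) (S y)" if "x \<in> hcarrier V" "y \<in> hcarrier V" for x y
      using that S bounded_op_closed[OF T] by (intro vector_eqI) (auto simp flip: adj)
    show "S (hscale V a x) = hscale V a (S x)" if "x \<in> hcarrier V" for a x
      using that S bounded_op_closed[OF T] by (intro vector_eqI) (auto simp flip: adj)
  qed (use S adjoint_norm_bound[OF T c S adj] in auto)
  then show ?thesis unfolding is_adjoint_def using adj by blast
qed

lemma adjoint_exists:
  assumes T: "bounded_op V T"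
  shows "\<exists>S. is_adjoint V T S"
proof -
  obtain c where c: "\<And>x. x \<in> hcarrier V \<Longrightarrow> hnorm V (T x) \<le> c * hnorm V x"
    using T unfolding bounded_op_def by blast
  have "\<exists>z\<in>hcarrier V. \<forall>x\<in>hcarrier V. hinner V (T x) y = hinner V x z"
    if y: "y \<in> hcarrier V" for y
  proof -
    have bound: "cmod (hinner V y (T x)) \<le> hnorm V y * c * hnorm V x" if x: "x \<in> hcarrier V" for x
    proof -
      have "cmod (hinner V y (T x)) \<le> hnorm V y * hnorm V (T x)"
        using cauchy_schwarz[OF y bounded_op_closed[OF T x]] .
      also have "\<dots> \<le> hnorm V y * (c * hnorm V x)"
        using c[OF x] norm_nonneg[OF y] by (rule mult_left_mono)
      finally show ?thesis by (simp add: mult.assoc)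
    qed
    have "\<exists>z\<in>hcarrier V. \<forall>x\<in>hcarrier V. hinner V y (T x) = hinner V z x"
      by (rule riesz_representation[where c = "hnorm V y * c"])
        (use y bounded_op_linear[OF T] bound in auto)
    then obtain z where z: "z \<in> hcarrier V" "\<forall>x\<in>hcarrier V. hinner V y (T x) = hinner V z x"
      by blast
    have "hinner V (T x) y = hinner V x z" if "x \<in> hcarrier V" for x
      using z that y bounded_op_closed[OF T] inner_commute by metis
    then show ?thesis using z(1) by blast
  qed
  then obtain S where "\<forall>y\<in>hcarrier V. S y \<in> hcarrier V \<and> (\<forall>x\<in>hcarrier V. hinner V (T x) y = hinner V x (S y))"
    by metis
  then show ?thesis using is_adjointI[OF T] by blast
qed

lemma hadjoint_is_adjoint: "bounded_op V T \<Longrightarrow> is_adjoint V T (hadjoint V T)"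
  unfolding hadjoint_def using adjoint_exists by (rule someI_ex)

lemma hadjoint_eq:
  assumes T: "bounded_op V T" and S: "is_adjoint V T S" and y: "y \<in> hcarrier V"
  shows "hadjoint V T y = S y"
proof -
  have "hadjoint V T y \<in> hcarrier V" "S y \<in> hcarrier V"
    using hadjoint_is_adjoint[OF T] S y unfolding is_adjoint_def bounded_op_def by blast+
  moreover have "hinner V z (hadjoint V T y) = hinner V z (S y)" if "z \<in> hcarrier V" for z
    using hadjoint_is_adjoint[OF T] S y that unfolding is_adjoint_def by metis
  ultimately show ?thesis by (rule vector_eqI)
qed

lemma unitary_opI:
  assumes U: "\<And>x. x \<in> hcarrier V \<Longrightarrow> U x \<in> hcarrier V"
    and U_inner: "\<And>x y. x \<in> hcarrier V \<Longrightarrow> y \<in> hcarrier V \<Longrightarrow> hinner V (U x) (U y) = hinner V x y"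
    and S: "\<And>y. y \<in> hcarrier V \<Longrightarrow> S y \<in> hcarrier V"
    and U_S: "\<And>y. y \<in> hcarrier V \<Longrightarrow> U (S y) = y"
  shows "unitary_op V U"
proof -
  have adj: "hinner V (U x) y = hinner V x (S y)" if "x \<in> hcarrier V" "y \<in> hcarrier V" for x y
    using U_inner[OF that(1) S[OF that(2)]] U_S[OF that(2)] by simp
  have adj': "hinner V y (U x) = hinner V (S y) x" if "x \<in> hcarrier V" "y \<in> hcarrier V" for x y
    using adj[OF that] inner_commute that U S by metis
  have "bounded_op V U"
    unfolding bounded_op_def
  proof (intro conjI ballI allI exI)
    show "U (hadd V x y) = hadd V (U x) (U y)" if "x \<in> hcarrier V" "y \<in> hcarrier V" for x y
      using that U S by (intro vector_eqI) (simp_all add: adj')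
    show "U (hscale V a x) = hscale V a (U x)" if "x \<in> hcarrier V" for a x
      using that U S by (intro vector_eqI) (simp_all add: adj')
    show "hnorm V (U x) \<le> 1 * hnorm V x" if "x \<in> hcarrier V" for x
      using U_inner[OF that that] by (simp add: hnorm_def)
  qed (use U in blast)
  moreover have "hadjoint V U y = S y" if "y \<in> hcarrier V" for y
    using hadjoint_eq[OF calculation is_adjointI[OF calculation S adj] that] .
  moreover have "S (U x) = x" if "x \<in> hcarrier V" for x
    using that U S by (intro vector_eqI) (simp_all flip: adj add: U_inner)
  ultimately show ?thesis unfolding unitary_op_def using U U_S by simp
qed

end

lemma closed_subspace_chilbert:
  assumes V: "chilbert V" and S: "closed_subspace V S"
  shows "chilbert (V\<lparr>hcarrier := S\<rparr>)"
proof -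
  have norm: "hnorm (V\<lparr>hcarrier := S\<rparr>) = hnorm V" and diff: "hdiff (V\<lparr>hcarrier := S\<rparr>) = hdiff V"
    by (simp_all add: fun_eq_iff hnorm_def hdiff_def)
  interpret chilbert V by (fact V)
  note SC = subsetD[OF closed_subspaceD(1)[OF S]] and S0 = closed_subspaceD(2)[OF S]
    and S_add = closed_subspaceD(3)[OF S] and S_scale = closed_subspaceD(4)[OF S]
    and S_lim = closed_subspaceD(5)[OF S]
  show ?thesis
  proof unfold_locales
    show "hinner (V\<lparr>hcarrier := S\<rparr>) x y = cnj (hinner (V\<lparr>hcarrier := S\<rparr>) y x)"
      if "x \<in> hcarrier (V\<lparr>hcarrier := S\<rparr>)" "y \<in> hcarrier (V\<lparr>hcarrier := S\<rparr>)" for x y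
      using that SC by (simp add: inner_commute[of x y])
    show "hadd (V\<lparr>hcarrier := S\<rparr>) x y = hadd (V\<lparr>hcarrier := S\<rparr>) y x"
      if "x \<in> hcarrier (V\<lparr>hcarrier := S\<rparr>)" "y \<in> hcarrier (V\<lparr>hcarrier := S\<rparr>)" for x y
      using that SC by (simp add: add_commute[of x y])
    show "\<exists>l\<in>hcarrier (V\<lparr>hcarrier := S\<rparr>). hconverges (V\<lparr>hcarrier := S\<rparr>) f l"
      if f: "\<And>n. f n \<in> hcarrier (V\<lparr>hcarrier := S\<rparr>)"
        and cauchy: "hcauchy (V\<lparr>hcarrier := S\<rparr>) f" for f
    proof -
      obtain l where "l \<in> hcarrier V" "hconverges V f l"
        using complete[of f] f cauchy SC unfolding norm diff by auto
      then show ?thesis using S_lim[of f l] f unfolding norm diff by auto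
    qed
  qed (use SC S0 S_add S_scale in \<open>auto simp: add_assoc add_zero_left scale_left_distrib
      scale_right_distrib inner_self_real inner_self_nonneg inner_self_eq_zero\<close>)
qed

section \<open>The sequence space \<open>l\<^sup>2\<close>\<close>

text \<open>The conclusion asks for a space of sequences, so an element \<open>(h, a, b)\<close> of
  \<open>H \<oplus> l\<^sup>2 \<oplus> l\<^sup>2\<close> is stored as the single sequence \<open>h, a 0, b 0, a 1, b 1, \<dots>\<close>.\<close>

definition interleave :: "'v \<Rightarrow> (nat \<Rightarrow> 'v) \<Rightarrow> (nat \<Rightarrow> 'v) \<Rightarrow> nat \<Rightarrow> 'v" where
  "interleave h a b n = (if n = 0 then h else if odd n then a ((n - 1) div 2) else b ((n - 2) div 2))"

definition odd_part :: "(nat \<Rightarrow> 'v) \<Rightarrow> nat \<Rightarrow> 'v" where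
  "odd_part f k = f (2 * k + 1)"

definition even_part :: "(nat \<Rightarrow> 'v) \<Rightarrow> nat \<Rightarrow> 'v" where
  "even_part f k = f (2 * k + 2)"

lemma interleave_simps [simp]:
  "interleave h a b 0 = h" "interleave h a b (Suc (2 * k)) = a k"
  "interleave h a b (Suc (Suc (2 * k))) = b k"
  by (simp_all add: interleave_def)

lemma odd_part_interleave [simp]: "odd_part (interleave h a b) = a"
  and even_part_interleave [simp]: "even_part (interleave h a b) = b"
  by (simp_all add: odd_part_def even_part_def fun_eq_iff)

lemma nat_parity_cases:
  fixes n :: nat
  obtains "n = 0" | k where "n = 2 * k + 1" | k where "n = 2 * k + 2"
proof (cases "odd n")
  case True
  then show ?thesis using that(2) by (auto elim!: oddE)
next
  case False
  then obtain m where m: "n = 2 * m" by (auto elim!: evenE)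
  then show ?thesis using that(1,3) by (cases m) auto
qed

lemma interleave_parts: "interleave (f 0) (odd_part f) (even_part f) = f"
proof
  show "interleave (f 0) (odd_part f) (even_part f) n = f n" for n
    by (cases n rule: nat_parity_cases) (simp_all add: odd_part_def even_part_def)
qed

lemma interleave_eq_iff: "interleave h a b = interleave h' a' b' \<longleftrightarrow> h = h' \<and> a = a' \<and> b = b'"
  by (metis interleave_simps(1) odd_part_interleave even_part_interleave)

lemma map_interleave: "(\<lambda>n. F (interleave h a b n)) = interleave (F h) (\<lambda>k. F (a k)) (\<lambda>k. F (b k))"
proof
  show "F (interleave h a b n) = interleave (F h) (\<lambda>k. F (a k)) (\<lambda>k. F (b k)) n" for n
    by (cases n rule: nat_parity_cases) simp_all
qed

lemma map2_interleave:
  "(\<lambda>n. F (interleave h a b n) (interleave h' a' b' n))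
    = interleave (F h h') (\<lambda>k. F (a k) (a' k)) (\<lambda>k. F (b k) (b' k))"
proof
  show "F (interleave h a b n) (interleave h' a' b' n)
      = interleave (F h h') (\<lambda>k. F (a k) (a' k)) (\<lambda>k. F (b k) (b' k)) n" for n
    by (cases n rule: nat_parity_cases) simp_all
qed

lemma interleave_split:
  fixes h :: "'b::comm_monoid_add"
  shows "interleave h a b
    = (\<lambda>n. (if n = 0 then h else 0) + interleave 0 a (\<lambda>_. 0) n + interleave 0 (\<lambda>_. 0) b n)"
proof
  show "interleave h a b n
      = (if n = 0 then h else 0) + interleave 0 a (\<lambda>_. 0) n + interleave 0 (\<lambda>_. 0) b n" for n
    by (cases n rule: nat_parity_cases) simp_all
qed

lemma sums_interleave_odd:
  fixes a :: "nat \<Rightarrow> 'b::real_normed_vector"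
  shows "interleave 0 a (\<lambda>_. 0) sums s \<longleftrightarrow> a sums s"
proof -
  have "strict_mono (\<lambda>k::nat. 2 * k + 1)" by (rule strict_monoI) simp
  moreover have "interleave 0 a (\<lambda>_. 0) n = 0" if "n \<notin> range (\<lambda>k. 2 * k + 1)" for n
    using that by (cases n rule: nat_parity_cases) (simp_all add: image_iff)
  ultimately have "(\<lambda>k. interleave 0 a (\<lambda>_. 0) (2 * k + 1)) sums s \<longleftrightarrow> interleave 0 a (\<lambda>_. 0) sums s"
    by (rule sums_mono_reindex)
  moreover have "(\<lambda>k. interleave 0 a (\<lambda>_. 0) (2 * k + 1)) = a"
    by (rule ext) (simp add: interleave_def)
  ultimately show ?thesis by metis
qed

lemma sums_interleave_even:
  fixes b :: "nat \<Rightarrow> 'b::real_normed_vector"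
  shows "interleave 0 (\<lambda>_. 0) b sums s \<longleftrightarrow> b sums s"
proof -
  have "strict_mono (\<lambda>k::nat. 2 * k + 2)" by (rule strict_monoI) simp
  moreover have "interleave 0 (\<lambda>_. 0) b n = 0" if "n \<notin> range (\<lambda>k. 2 * k + 2)" for n
    using that by (cases n rule: nat_parity_cases) (simp_all add: image_iff)
  ultimately have "(\<lambda>k. interleave 0 (\<lambda>_. 0) b (2 * k + 2)) sums s \<longleftrightarrow> interleave 0 (\<lambda>_. 0) b sums s"
    by (rule sums_mono_reindex)
  moreover have "(\<lambda>k. interleave 0 (\<lambda>_. 0) b (2 * k + 2)) = b"
    by (rule ext) (simp add: interleave_def)
  ultimately show ?thesis by metis
qed

lemma sums_interleave:
  fixes a b :: "nat \<Rightarrow> 'b::real_normed_vector"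
  assumes "a sums s" "b sums t"
  shows "interleave h a b sums (h + s + t)"
proof -
  have "(\<lambda>n. if n = 0 then h else 0) sums h" using sums_single[of 0 "\<lambda>_. h"] by simp
  moreover have "interleave 0 a (\<lambda>_. 0) sums s" using assms(1) sums_interleave_odd by blast
  moreover have "interleave 0 (\<lambda>_. 0) b sums t" using assms(2) sums_interleave_even by blast
  ultimately show ?thesis unfolding interleave_split[of h] by (intro sums_add)
qed

lemma summable_interleave_iff:
  fixes a b :: "nat \<Rightarrow> real"
  assumes "0 \<le> h" "\<And>k. 0 \<le> a k" "\<And>k. 0 \<le> b k"
  shows "summable (interleave h a b) \<longleftrightarrow> summable a \<and> summable b"
proof
  assume s: "summable (interleave h a b)"
  have "summable (interleave 0 a (\<lambda>_. 0))" "summable (interleave 0 (\<lambda>_. 0) b)"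
    by (rule summable_comparison_test'[OF s], case_tac n rule: nat_parity_cases, simp_all add: assms)+
  then show "summable a \<and> summable b"
    unfolding summable_def sums_interleave_odd sums_interleave_even by blast
qed (auto simp: summable_def intro: sums_interleave)

definition on_parts :: "('v \<Rightarrow> (nat \<Rightarrow> 'v) \<Rightarrow> (nat \<Rightarrow> 'v) \<Rightarrow> 'w) \<Rightarrow> (nat \<Rightarrow> 'v) \<Rightarrow> 'w" where
  "on_parts F f = F (f 0) (odd_part f) (even_part f)"

lemma on_parts_interleave [simp]: "on_parts F (interleave h a b) = F h a b"
  by (simp add: on_parts_def)

definition l2space :: "('v, 'm) chspace_scheme \<Rightarrow> (nat \<Rightarrow> 'v) chspace" where
  "l2space V = \<lparr>hcarrier = {f. (\<forall>n. f n \<in> hcarrier V) \<and> summable (\<lambda>n. (hnorm V (f n))\<^sup>2)},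
     hadd = (\<lambda>f g n. hadd V (f n) (g n)), hzero = (\<lambda>n. hzero V),
     hscale = (\<lambda>a f n. hscale V a (f n)), hinner = (\<lambda>f g. \<Sum>n. hinner V (f n) (g n))\<rparr>"

lemma l2space_simps [simp]:
  "hadd (l2space V) f g = (\<lambda>n. hadd V (f n) (g n))"
  "hzero (l2space V) = (\<lambda>n. hzero V)"
  "hscale (l2space V) a f = (\<lambda>n. hscale V a (f n))"
  "hinner (l2space V) f g = (\<Sum>n. hinner V (f n) (g n))"
  "hdiff (l2space V) f g = (\<lambda>n. hdiff V (f n) (g n))"
  by (simp_all add: l2space_def hdiff_def)

lemma l2space_carrier:
  "f \<in> hcarrier (l2space V) \<longleftrightarrow> (\<forall>n. f n \<in> hcarrier V) \<and> summable (\<lambda>n. (hnorm V (f n))\<^sup>2)"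
  by (simp add: l2space_def)

context chilbert
begin

lemma l2_summable_inner:
  assumes "f \<in> hcarrier (l2space V)" "g \<in> hcarrier (l2space V)"
  shows "summable (\<lambda>n. hinner V (f n) (g n))"
proof (rule summable_norm_cancel, rule summable_comparison_test)
  have "cmod (hinner V x y) \<le> ((hnorm V x)\<^sup>2 + (hnorm V y)\<^sup>2) / 2"
    if "x \<in> hcarrier V" "y \<in> hcarrier V" for x y
    using cauchy_schwarz[OF that] sum_squares_bound[of "hnorm V x" "hnorm V y"] by simp
  then show "\<exists>N. \<forall>n\<ge>N. norm (cmod (hinner V (f n) (g n))) \<le> ((hnorm V (f n))\<^sup>2 + (hnorm V (g n))\<^sup>2) / 2"
    using assms unfolding l2space_carrier by auto
  show "summable (\<lambda>n. ((hnorm V (f n))\<^sup>2 + (hnorm V (g n))\<^sup>2) / 2)"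
    using assms unfolding l2space_carrier by (intro summable_divide summable_add) auto
qed

lemma l2_inner_self:
  assumes "f \<in> hcarrier (l2space V)"
  shows "hinner (l2space V) f f = of_real (\<Sum>n. (hnorm V (f n))\<^sup>2)"
proof -
  have "hinner (l2space V) f f = (\<Sum>n. of_real ((hnorm V (f n))\<^sup>2))"
    using assms by (simp add: l2space_carrier inner_self_norm del: of_real_power)
  also have "\<dots> = of_real (\<Sum>n. (hnorm V (f n))\<^sup>2)"
    using assms by (intro suminf_of_real[symmetric]) (simp add: l2space_carrier)
  finally show ?thesis .
qed

lemma l2_norm_sq:
  assumes "f \<in> hcarrier (l2space V)"
  shows "(hnorm (l2space V) f)\<^sup>2 = (\<Sum>n. (hnorm V (f n))\<^sup>2)"
  using assms l2_inner_self[OF assms] suminf_nonneg[of "\<lambda>n. (hnorm V (f n))\<^sup>2"]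
  unfolding l2space_carrier by (simp add: hnorm_def)

lemma l2_norm_nonneg:
  assumes f: "f \<in> hcarrier (l2space V)"
  shows "0 \<le> hnorm (l2space V) f"
proof -
  have "0 \<le> (\<Sum>n. (hnorm V (f n))\<^sup>2)"
    using f by (intro suminf_nonneg) (auto simp: l2space_carrier)
  then show ?thesis unfolding hnorm_def[of "l2space V"] l2_inner_self[OF f] by simp
qed

lemma l2_dominated:
  assumes x: "x \<in> hcarrier (l2space V)" and u: "\<And>k. u k \<in> hcarrier V"
    and le: "\<And>k. hnorm V (u k) \<le> c * hnorm V (x k)"
  shows "u \<in> hcarrier (l2space V)"
  unfolding l2space_carrier
proof (intro conjI allI u)
  show "summable (\<lambda>k. (hnorm V (u k))\<^sup>2)"
  proof (rule summable_comparison_test')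
    show "summable (\<lambda>k. c\<^sup>2 * (hnorm V (x k))\<^sup>2)"
      using x unfolding l2space_carrier by (intro summable_mult) auto
    show "norm ((hnorm V (u k))\<^sup>2) \<le> c\<^sup>2 * (hnorm V (x k))\<^sup>2" for k
      using power_mono[OF le norm_nonneg[OF u]] by (simp add: power_mult_distrib)
  qed
qed

lemma l2_add_closed:
  assumes f: "f \<in> hcarrier (l2space V)" and g: "g \<in> hcarrier (l2space V)"
  shows "hadd (l2space V) f g \<in> hcarrier (l2space V)"
  unfolding l2space_carrier l2space_simps
proof (intro conjI allI; (rule summable_comparison_test')?)
  show "hadd V (f n) (g n) \<in> hcarrier V" for n using f g unfolding l2space_carrier by auto
  show "summable (\<lambda>n. 2 * (hnorm V (f n))\<^sup>2 + 2 * (hnorm V (g n))\<^sup>2)"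
    using f g unfolding l2space_carrier by (intro summable_add summable_mult) auto
  show "norm ((hnorm V (hadd V (f n) (g n)))\<^sup>2) \<le> 2 * (hnorm V (f n))\<^sup>2 + 2 * (hnorm V (g n))\<^sup>2" for n
  proof -
    have fg: "f n \<in> hcarrier V" "g n \<in> hcarrier V" using f g unfolding l2space_carrier by auto
    have "(hnorm V (hadd V (f n) (g n)))\<^sup>2 \<le> (hnorm V (f n) + hnorm V (g n))\<^sup>2"
      using norm_triangle[OF fg] fg by (intro power_mono) auto
    also have "\<dots> \<le> 2 * (hnorm V (f n))\<^sup>2 + 2 * (hnorm V (g n))\<^sup>2"
      using sum_squares_bound[of "hnorm V (f n)" "hnorm V (g n)"] by (simp add: power2_sum)
    finally show ?thesis by simp
  qed
qed

lemma l2_scale_closed: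
  assumes "f \<in> hcarrier (l2space V)"
  shows "hscale (l2space V) a f \<in> hcarrier (l2space V)"
  using assms unfolding l2space_simps
  by (rule l2_dominated) (use assms in \<open>auto simp: l2space_carrier norm_scale\<close>)

lemma l2_diff_closed:
  "f \<in> hcarrier (l2space V) \<Longrightarrow> g \<in> hcarrier (l2space V) \<Longrightarrow> hdiff (l2space V) f g \<in> hcarrier (l2space V)"
  unfolding hdiff_def by (intro l2_add_closed l2_scale_closed)

lemma l2_component_le:
  assumes f: "f \<in> hcarrier (l2space V)"
  shows "hnorm V (f n) \<le> hnorm (l2space V) f"
proof -
  have "(\<Sum>i\<in>{n}. (hnorm V (f i))\<^sup>2) \<le> (\<Sum>i. (hnorm V (f i))\<^sup>2)"
    using f unfolding l2space_carrier by (intro sum_le_suminf) auto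
  then have "(hnorm V (f n))\<^sup>2 \<le> (hnorm (l2space V) f)\<^sup>2" using l2_norm_sq[OF f] by simp
  then show ?thesis using l2_norm_nonneg[OF f] by (rule power2_le_imp_le)
qed

text \<open>Each partial sum of the squared distances to \<open>L\<close> is a limit of partial sums bounded
  by \<open>e\<^sup>2\<close>.\<close>

lemma l2_componentwise_limit_bound:
  assumes F: "\<And>m. F m \<in> hcarrier (l2space V)" and L: "\<And>n. L n \<in> hcarrier V"
    and lim: "\<And>n. hconverges V (\<lambda>m. F m n) (L n)"
    and close: "\<And>m. m \<ge> N \<Longrightarrow> hnorm (l2space V) (hdiff (l2space V) (F k) (F m)) \<le> e"
  shows "hdiff (l2space V) (F k) L \<in> hcarrier (l2space V)"
    and "hnorm (l2space V) (hdiff (l2space V) (F k) L) \<le> e"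
proof -
  have FC: "F m n \<in> hcarrier V" for m n using F unfolding l2space_carrier by auto
  have e: "0 \<le> e"
    using close[OF order_refl] l2_norm_nonneg[OF l2_diff_closed[OF F[of k] F[of N]]] by linarith
  have partial: "(\<Sum>n<M. (hnorm V (hdiff V (F k n) (L n)))\<^sup>2) \<le> e\<^sup>2" for M
  proof (rule tendsto_le[OF trivial_limit_sequentially tendsto_const])
    show "(\<lambda>m. \<Sum>n<M. (hnorm V (hdiff V (F k n) (F m n)))\<^sup>2) \<longlonglongrightarrow> (\<Sum>n<M. (hnorm V (hdiff V (F k n) (L n)))\<^sup>2)"
      using hconverges_norm_diff[OF lim FC L FC] by (intro tendsto_sum tendsto_power)
    show "\<forall>\<^sub>F m in sequentially. (\<Sum>n<M. (hnorm V (hdiff V (F k n) (F m n)))\<^sup>2) \<le> e\<^sup>2"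
    proof (rule eventually_sequentiallyI[of N])
      fix m assume "N \<le> m"
      have D: "hdiff (l2space V) (F k) (F m) \<in> hcarrier (l2space V)" using F F by (rule l2_diff_closed)
      have "(\<Sum>n<M. (hnorm V (hdiff V (F k n) (F m n)))\<^sup>2) \<le> (\<Sum>n. (hnorm V (hdiff V (F k n) (F m n)))\<^sup>2)"
        using D unfolding l2space_carrier l2space_simps by (intro sum_le_suminf) auto
      also have "\<dots> = (hnorm (l2space V) (hdiff (l2space V) (F k) (F m)))\<^sup>2"
        using l2_norm_sq[OF D] by simp
      also have "\<dots> \<le> e\<^sup>2"
        using close[OF \<open>N \<le> m\<close>] l2_norm_nonneg[OF D] by (intro power_mono) auto
      finally show "(\<Sum>n<M. (hnorm V (hdiff V (F k n) (F m n)))\<^sup>2) \<le> e\<^sup>2" .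
    qed
  qed
  have summable: "summable (\<lambda>n. (hnorm V (hdiff V (F k n) (L n)))\<^sup>2)"
  proof (rule bounded_imp_summable)
    show "(\<Sum>i\<le>n. (hnorm V (hdiff V (F k i) (L i)))\<^sup>2) \<le> e\<^sup>2" for n
      using partial[of "Suc n"] by (simp only: lessThan_Suc_atMost)
  qed simp
  then show D: "hdiff (l2space V) (F k) L \<in> hcarrier (l2space V)"
    unfolding l2space_carrier using FC L by simp
  have "(hnorm (l2space V) (hdiff (l2space V) (F k) L))\<^sup>2 \<le> e\<^sup>2"
    using l2_norm_sq[OF D] suminf_le_const[OF summable partial] by simp
  then show "hnorm (l2space V) (hdiff (l2space V) (F k) L) \<le> e"
    using e by (rule power2_le_imp_le)
qed

lemma l2_complete:
  assumes F: "\<And>m. F m \<in> hcarrier (l2space V)" and cauchy: "hcauchy (l2space V) F"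
  shows "\<exists>L\<in>hcarrier (l2space V). hconverges (l2space V) F L"
proof -
  have FC: "F m n \<in> hcarrier V" for m n using F unfolding l2space_carrier by auto
  have "hnorm V (hdiff V (F m n) (F k n)) \<le> hnorm (l2space V) (hdiff (l2space V) (F m) (F k))" for m k n
    using l2_component_le[OF l2_diff_closed[OF F[of m] F[of k]], of n] by simp
  then have "hcauchy V (\<lambda>m. F m n)" for n
    using cauchy by (meson le_less_trans)
  then have "\<exists>l\<in>hcarrier V. hconverges V (\<lambda>m. F m n) l" for n
    using complete[of "\<lambda>m. F m n"] FC by blast
  then obtain L where L: "\<And>n. L n \<in> hcarrier V" and lim: "\<And>n. hconverges V (\<lambda>m. F m n) (L n)"
    by metis
  have bound: "\<exists>N. \<forall>k\<ge>N. hdiff (l2space V) (F k) L \<in> hcarrier (l2space V) \<and>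
      hnorm (l2space V) (hdiff (l2space V) (F k) L) \<le> e" if "e > 0" for e
  proof -
    obtain N where "\<forall>m\<ge>N. \<forall>k\<ge>N. hnorm (l2space V) (hdiff (l2space V) (F k) (F m)) < e"
      using cauchy \<open>e > 0\<close> by blast
    then show ?thesis
      using l2_componentwise_limit_bound[OF F L lim, where N = N and e = e] less_imp_le by blast
  qed
  then obtain N where N: "hdiff (l2space V) (F N) L \<in> hcarrier (l2space V)"
    using zero_less_one by blast
  have "hdiff (l2space V) (F N) (hdiff (l2space V) (F N) L) = L"
    using FC L by (auto intro!: vector_eqI)
  then have "L \<in> hcarrier (l2space V)" using l2_diff_closed[OF F[of N] N] by simp
  moreover have "hconverges (l2space V) F L"
  proof (rule LIMSEQ_I)
    fix r :: real assume r: "r > 0"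
    then obtain N where N: "\<forall>k\<ge>N. hdiff (l2space V) (F k) L \<in> hcarrier (l2space V) \<and>
        hnorm (l2space V) (hdiff (l2space V) (F k) L) \<le> r / 2"
      using bound[of "r / 2"] by auto
    have "norm (hnorm (l2space V) (hdiff (l2space V) (F k) L) - 0) < r" if "k \<ge> N" for k
      using N that l2_norm_nonneg r by fastforce
    then show "\<exists>N. \<forall>k\<ge>N. norm (hnorm (l2space V) (hdiff (l2space V) (F k) L) - 0) < r" by blast
  qed
  ultimately show ?thesis by blast
qed

lemma l2_chilbert: "chilbert (l2space V)"
proof -
  have C: "f n \<in> hcarrier V" if "f \<in> hcarrier (l2space V)" for f n
    using that unfolding l2space_carrier by blast
  show ?thesis
  proof unfold_locales
    show "hzero (l2space V) \<in> hcarrier (l2space V)" by (simp add: l2space_carrier)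
    show "hadd (l2space V) x y \<in> hcarrier (l2space V)"
      if "x \<in> hcarrier (l2space V)" "y \<in> hcarrier (l2space V)" for x y
      using that by (rule l2_add_closed)
    show "hscale (l2space V) a x \<in> hcarrier (l2space V)" if "x \<in> hcarrier (l2space V)" for a x
      using that by (rule l2_scale_closed)
    show "\<exists>l\<in>hcarrier (l2space V). hconverges (l2space V) f l"
      if "\<And>n. f n \<in> hcarrier (l2space V)" "hcauchy (l2space V) f" for f
      using that by (rule l2_complete)
  next
    fix x y z a b
    assume x: "x \<in> hcarrier (l2space V)" and y: "y \<in> hcarrier (l2space V)"
      and z: "z \<in> hcarrier (l2space V)"
    show "hadd (l2space V) (hadd (l2space V) x y) z = hadd (l2space V) x (hadd (l2space V) y z)"
      using C[OF x] C[OF y] C[OF z] by (simp add: add_assoc)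
    show "hadd (l2space V) x y = hadd (l2space V) y x"
      using C[OF x] C[OF y] by (simp add: add_commute)
    show "hscale (l2space V) a (hadd (l2space V) x y)
        = hadd (l2space V) (hscale (l2space V) a x) (hscale (l2space V) a y)"
      using C[OF x] C[OF y] by (simp add: scale_right_distrib)
    have "(\<lambda>n. cnj (hinner V (y n) (x n))) sums cnj (\<Sum>n. hinner V (y n) (x n))"
      using summable_sums[OF l2_summable_inner[OF y x]] by (simp add: sums_cnj)
    then show "hinner (l2space V) x y = cnj (hinner (l2space V) y x)"
      using C[OF x] C[OF y] by (simp add: inner_commute[of "x _"] sums_iff)
    show "hinner (l2space V) x (hadd (l2space V) y z) = hinner (l2space V) x y + hinner (l2space V) x z"
      using C[OF x] C[OF y] C[OF z] l2_summable_inner[OF x y] l2_summable_inner[OF x z]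
      by (simp add: suminf_add)
    show "hinner (l2space V) x (hscale (l2space V) a y) = a * hinner (l2space V) x y"
      using C[OF x] C[OF y] l2_summable_inner[OF x y] by (simp add: suminf_mult)
  next
    fix x a b assume x: "x \<in> hcarrier (l2space V)"
    show "hadd (l2space V) (hzero (l2space V)) x = x" "hscale (l2space V) 0 x = hzero (l2space V)"
      "hscale (l2space V) 1 x = x" "hscale (l2space V) a (hscale (l2space V) b x) = hscale (l2space V) (a * b) x"
      "hscale (l2space V) (a + b) x = hadd (l2space V) (hscale (l2space V) a x) (hscale (l2space V) b x)"
      using C[OF x] by (simp_all add: add_zero_left scale_left_distrib)
    show "Im (hinner (l2space V) x x) = 0" "0 \<le> Re (hinner (l2space V) x x)"
      using l2_inner_self[OF x] C[OF x] x unfolding l2space_carrier by (simp_all add: suminf_nonneg)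
    assume "hinner (l2space V) x x = 0"
    then have "(\<Sum>n. (hnorm V (x n))\<^sup>2) = 0" using l2_inner_self[OF x] by simp
    then show "x = hzero (l2space V)"
      using x C[OF x] norm_eq_zero_iff unfolding l2space_carrier by (auto simp: suminf_eq_zero_iff)
  qed
qed

lemma interleave_in_l2:
  "interleave h a b \<in> hcarrier (l2space V)
    \<longleftrightarrow> h \<in> hcarrier V \<and> a \<in> hcarrier (l2space V) \<and> b \<in> hcarrier (l2space V)"
proof -
  have "(\<forall>n. interleave h a b n \<in> hcarrier V)
      \<longleftrightarrow> h \<in> hcarrier V \<and> (\<forall>k. a k \<in> hcarrier V) \<and> (\<forall>k. b k \<in> hcarrier V)"
  proof
    assume "\<forall>n. interleave h a b n \<in> hcarrier V"
    then have "interleave h a b 0 \<in> hcarrier V" "interleave h a b (Suc (2 * k)) \<in> hcarrier V"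
      "interleave h a b (Suc (Suc (2 * k))) \<in> hcarrier V" for k
      by blast+
    then show "h \<in> hcarrier V \<and> (\<forall>k. a k \<in> hcarrier V) \<and> (\<forall>k. b k \<in> hcarrier V)" by simp
  next
    assume "h \<in> hcarrier V \<and> (\<forall>k. a k \<in> hcarrier V) \<and> (\<forall>k. b k \<in> hcarrier V)"
    then show "\<forall>n. interleave h a b n \<in> hcarrier V"
      by (metis interleave_simps nat_parity_cases add_2_eq_Suc' Suc_eq_plus1)
  qed
  moreover have "summable (\<lambda>n. (hnorm V (interleave h a b n))\<^sup>2)
      \<longleftrightarrow> summable (\<lambda>k. (hnorm V (a k))\<^sup>2) \<and> summable (\<lambda>k. (hnorm V (b k))\<^sup>2)"
    if "h \<in> hcarrier V" "\<forall>k. a k \<in> hcarrier V" "\<forall>k. b k \<in> hcarrier V"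
    using that unfolding map_interleave[of "\<lambda>x. (hnorm V x)\<^sup>2"]
    by (intro summable_interleave_iff) auto
  ultimately show ?thesis unfolding l2space_carrier by blast
qed

lemma l2_inner_interleave:
  assumes "h \<in> hcarrier V" "h' \<in> hcarrier V"
    and "a \<in> hcarrier (l2space V)" "a' \<in> hcarrier (l2space V)"
    and "b \<in> hcarrier (l2space V)" "b' \<in> hcarrier (l2space V)"
  shows "hinner (l2space V) (interleave h a b) (interleave h' a' b')
    = hinner V h h' + hinner (l2space V) a a' + hinner (l2space V) b b'"
  using sums_interleave[OF summable_sums[OF l2_summable_inner] summable_sums[OF l2_summable_inner],
      of a a' b b' "hinner V h h'"] assms
  by (simp add: map2_interleave[of "hinner V"] sums_iff)

lemma l2_shift_iff:
  "x \<in> hcarrier (l2space V) \<longleftrightarrow> x 0 \<in> hcarrier V \<and> (\<lambda>k. x (Suc k)) \<in> hcarrier (l2space V)"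
  unfolding l2space_carrier summable_Suc_iff[of "\<lambda>k. (hnorm V (x k))\<^sup>2", symmetric]
  by (metis not0_implies_Suc)

lemma l2_inner_shift:
  assumes "x \<in> hcarrier (l2space V)" "y \<in> hcarrier (l2space V)"
  shows "hinner (l2space V) x y = hinner V (x 0) (y 0) + hinner (l2space V) (\<lambda>k. x (Suc k)) (\<lambda>k. y (Suc k))"
  using suminf_split_head[OF l2_summable_inner[OF assms]] by simp

lemma l2_map:
  assumes T: "bounded_op V T" and x: "x \<in> hcarrier (l2space V)"
  shows "(\<lambda>k. T (x k)) \<in> hcarrier (l2space V)"
proof -
  obtain c where "\<And>y. y \<in> hcarrier V \<Longrightarrow> hnorm V (T y) \<le> c * hnorm V y"
    using T unfolding bounded_op_def by blast
  then show ?thesis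
    using x T by (intro l2_dominated[OF x]) (auto simp: l2space_carrier bounded_op_def)
qed

lemma l2_unimodular_scale:
  assumes x: "x \<in> hcarrier (l2space V)" and c: "\<And>k. cmod (c k) = 1"
  shows "(\<lambda>k. hscale V (c k) (x k)) \<in> hcarrier (l2space V)"
  using x c by (intro l2_dominated[OF x, where c = 1]) (auto simp: l2space_carrier norm_scale)

lemma l2_inner_eq_pointwise:
  assumes u: "u \<in> hcarrier (l2space V)" "u' \<in> hcarrier (l2space V)"
    and v: "v \<in> hcarrier (l2space V)" "v' \<in> hcarrier (l2space V)"
    and x: "x \<in> hcarrier (l2space V)" "x' \<in> hcarrier (l2space V)"
    and y: "y \<in> hcarrier (l2space V)" "y' \<in> hcarrier (l2space V)"
    and eq: "\<And>k. hinner V (u k) (u' k) + hinner V (v k) (v' k) = hinner V (x k) (x' k) + hinner V (y k) (y' k)"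
  shows "hinner (l2space V) u u' + hinner (l2space V) v v' = hinner (l2space V) x x' + hinner (l2space V) y y'"
proof -
  have "hinner (l2space V) u u' + hinner (l2space V) v v' = (\<Sum>k. hinner V (u k) (u' k) + hinner V (v k) (v' k))"
    using suminf_add[OF l2_summable_inner[OF u] l2_summable_inner[OF v]] by simp
  also have "\<dots> = (\<Sum>k. hinner V (x k) (x' k) + hinner V (y k) (y' k))"
    by (simp only: eq)
  also have "\<dots> = hinner (l2space V) x x' + hinner (l2space V) y y'"
    using suminf_add[OF l2_summable_inner[OF x] l2_summable_inner[OF y]] by simp
  finally show ?thesis .
qed

end

section \<open>The dilation\<close>

locale twisted_coisometries = chilbert H for H :: "'a chspace" +
  fixes W1 W2 Q :: "'a \<Rightarrow> 'a" and q :: complex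
  assumes coisometry_W1: "coisometry H W1" and coisometry_W2: "coisometry H W2"
    and unitary_Q: "unitary_op H Q"
    and twisted: "h \<in> hcarrier H \<Longrightarrow> W2 (W1 h) = W1 (W2 (Q h))"
    and q_unimodular: "cmod q = 1"
begin

abbreviation "V1 \<equiv> hadjoint H W1"
abbreviation "V2 \<equiv> hadjoint H W2"
abbreviation "Q' \<equiv> hadjoint H Q"

abbreviation "P1 x \<equiv> hdiff H x (V1 (W1 x))"
abbreviation "P2 x \<equiv> hdiff H x (V2 (W2 x))"

lemma W1_bounded: "bounded_op H W1" and W2_bounded: "bounded_op H W2" and Q_bounded: "bounded_op H Q"
  using coisometry_W1 coisometry_W2 unitary_Q unfolding coisometry_def unitary_op_def by blast+

lemma V1_adjoint: "is_adjoint H W1 V1" and V2_adjoint: "is_adjoint H W2 V2"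
  and Q'_adjoint: "is_adjoint H Q Q'"
  using hadjoint_is_adjoint W1_bounded W2_bounded Q_bounded by blast+

lemma V1_bounded: "bounded_op H V1" and V2_bounded: "bounded_op H V2" and Q'_bounded: "bounded_op H Q'"
  using V1_adjoint V2_adjoint Q'_adjoint unfolding is_adjoint_def by blast+

lemmas operator_linear [simp] =
  bounded_op_linear[OF W1_bounded] bounded_op_linear[OF W2_bounded] bounded_op_linear[OF Q_bounded]
  bounded_op_linear[OF V1_bounded] bounded_op_linear[OF V2_bounded] bounded_op_linear[OF Q'_bounded]

lemma operator_inverse [simp]:
  "x \<in> hcarrier H \<Longrightarrow> W1 (V1 x) = x" "x \<in> hcarrier H \<Longrightarrow> W2 (V2 x) = x"
  "x \<in> hcarrier H \<Longrightarrow> Q (Q' x) = x" "x \<in> hcarrier H \<Longrightarrow> Q' (Q x) = x"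
  using coisometry_W1 coisometry_W2 unitary_Q unfolding coisometry_def unitary_op_def by blast+

text \<open>These rules move the adjoints out of the right argument of an inner product, so that
  combined with \<open>vector_eqI\<close> they reduce identities between vectors to identities between
  complex numbers.\<close>

lemma inner_adjoint [simp]:
  "x \<in> hcarrier H \<Longrightarrow> y \<in> hcarrier H \<Longrightarrow> hinner H x (V1 y) = hinner H (W1 x) y"
  "x \<in> hcarrier H \<Longrightarrow> y \<in> hcarrier H \<Longrightarrow> hinner H x (V2 y) = hinner H (W2 x) y"
  "x \<in> hcarrier H \<Longrightarrow> y \<in> hcarrier H \<Longrightarrow> hinner H x (Q' y) = hinner H (Q x) y"
  "x \<in> hcarrier H \<Longrightarrow> y \<in> hcarrier H \<Longrightarrow> hinner H x (Q y) = hinner H (Q' x) y"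
  "x \<in> hcarrier H \<Longrightarrow> y \<in> hcarrier H \<Longrightarrow> hinner H (V1 x) y = hinner H x (W1 y)"
  "x \<in> hcarrier H \<Longrightarrow> y \<in> hcarrier H \<Longrightarrow> hinner H (V2 x) y = hinner H x (W2 y)"
  using V1_adjoint V2_adjoint Q'_adjoint
    adjoint_inner_left[OF W1_bounded V1_adjoint] adjoint_inner_left[OF W2_bounded V2_adjoint]
    adjoint_inner_left[OF Q_bounded Q'_adjoint, of x y] operator_inverse
  unfolding is_adjoint_def by auto

lemma twisted_sym [simp]: "x \<in> hcarrier H \<Longrightarrow> W1 (W2 (Q x)) = W2 (W1 x)"
  using twisted by simp

lemma q_cnj [simp]:
  "cnj q * q = 1" "q * cnj q = 1" "cnj q ^ k * q ^ k = 1" "q ^ k * cnj q ^ k = 1"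
  "cnj q ^ k * (q ^ k * z) = z" "q ^ k * (cnj q ^ k * z) = z"
  "cmod (q ^ k) = 1" "cmod (cnj q ^ k) = 1"
proof -
  show qq: "cnj q * q = 1" "q * cnj q = 1"
    using q_unimodular complex_norm_square[of q] by (simp_all add: mult.commute)
  show "cnj q ^ k * q ^ k = 1" "q ^ k * cnj q ^ k = 1"
    by (simp_all add: qq power_mult_distrib[symmetric])
  then show "cnj q ^ k * (q ^ k * z) = z" "q ^ k * (cnj q ^ k * z) = z"
    by (simp_all add: mult.assoc[symmetric])
  show "cmod (q ^ k) = 1" "cmod (cnj q ^ k) = 1"
    using q_unimodular by (simp_all add: norm_power)
qed

lemma W_defect [simp]: "x \<in> hcarrier H \<Longrightarrow> W1 (P1 x) = hzero H" "x \<in> hcarrier H \<Longrightarrow> W2 (P2 x) = hzero H"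
  by (intro vector_eqI; simp)+

lemma pythagoras_defect:
  "x \<in> hcarrier H \<Longrightarrow> y \<in> hcarrier H \<Longrightarrow> hinner H (P1 x) (P1 y) + hinner H (W1 x) (W1 y) = hinner H x y"
  "x \<in> hcarrier H \<Longrightarrow> y \<in> hcarrier H \<Longrightarrow> hinner H (P2 x) (P2 y) + hinner H (W2 x) (W2 y) = hinner H x y"
  by simp_all

lemma l2_defect:
  assumes "y \<in> hcarrier (l2space H)"
  shows "(\<lambda>k. P1 (y k)) \<in> hcarrier (l2space H)" "(\<lambda>k. P2 (y k)) \<in> hcarrier (l2space H)"
  using l2_diff_closed[OF assms l2_map[OF V1_bounded l2_map[OF W1_bounded assms]]]
    l2_diff_closed[OF assms l2_map[OF V2_bounded l2_map[OF W2_bounded assms]]]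
  by simp_all

text \<open>\<open>K = H \<oplus> l\<^sup>2(ker W1) \<oplus> l\<^sup>2(ker W2)\<close>, with \<open>H\<close> as the first summand.\<close>

definition K_carrier :: "(nat \<Rightarrow> 'a) set" where
  "K_carrier = {f \<in> hcarrier (l2space H).
     \<forall>k. W1 (odd_part f k) = hzero H \<and> W2 (even_part f k) = hzero H}"

definition K :: "(nat \<Rightarrow> 'a) chspace" where
  "K = (l2space H)\<lparr>hcarrier := K_carrier\<rparr>"

lemma K_simps [simp]:
  "hcarrier K = K_carrier" "hadd K = hadd (l2space H)" "hzero K = hzero (l2space H)"
  "hscale K = hscale (l2space H)" "hinner K = hinner (l2space H)"
  by (simp_all add: K_def)

lemma interleave_in_K:
  "interleave h a b \<in> K_carrier \<longleftrightarrow> h \<in> hcarrier H \<and> a \<in> hcarrier (l2space H) \<and>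
     b \<in> hcarrier (l2space H) \<and> (\<forall>k. W1 (a k) = hzero H) \<and> (\<forall>k. W2 (b k) = hzero H)"
  by (auto simp: K_carrier_def interleave_in_l2)

lemma K_cases:
  assumes "f \<in> K_carrier"
  obtains h a b where "f = interleave h a b" "h \<in> hcarrier H"
    "a \<in> hcarrier (l2space H)" "b \<in> hcarrier (l2space H)"
    "\<And>k. W1 (a k) = hzero H" "\<And>k. W2 (b k) = hzero H"
  using assms interleave_in_K[of "f 0" "odd_part f" "even_part f"] interleave_parts[of f] by metis

lemma K_closed_subspace: "closed_subspace (l2space H) K_carrier"
proof -
  have C: "f n \<in> hcarrier H" if "f \<in> K_carrier" for f n
    using that by (auto simp: K_carrier_def l2space_carrier)
  have sub: "K_carrier \<subseteq> hcarrier (l2space H)" by (auto simp: K_carrier_def)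
  have zero: "hzero (l2space H) \<in> K_carrier"
    by (simp add: K_carrier_def l2space_carrier odd_part_def even_part_def)
  have add: "hadd (l2space H) f g \<in> K_carrier" if "f \<in> K_carrier" "g \<in> K_carrier" for f g
    using that C[OF that(1)] C[OF that(2)] l2_add_closed[of f g]
    by (auto simp: K_carrier_def odd_part_def even_part_def)
  have scale: "hscale (l2space H) a f \<in> K_carrier" if "f \<in> K_carrier" for a f
    using that C[OF that] l2_scale_closed[of f a]
    by (auto simp: K_carrier_def odd_part_def even_part_def)
  have lim: "l \<in> K_carrier"
    if f: "\<forall>n. f n \<in> K_carrier" and l: "l \<in> hcarrier (l2space H)"
      and lim: "hconverges (l2space H) f l" for f l
  proof -
    have fC: "f n \<in> hcarrier (l2space H)" for n using f by (auto simp: K_carrier_def)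
    have lC: "l m \<in> hcarrier H" for m using l by (simp add: l2space_carrier)
    have component: "hconverges H (\<lambda>n. f n m) (l m)" for m
    proof (rule tendsto_sandwich[OF _ _ tendsto_const lim])
      show "\<forall>\<^sub>F n in sequentially. 0 \<le> hnorm H (hdiff H (f n m) (l m))"
        using C f lC by simp
      show "\<forall>\<^sub>F n in sequentially. hnorm H (hdiff H (f n m) (l m))
          \<le> hnorm (l2space H) (hdiff (l2space H) (f n) l)"
        using l2_component_le[OF l2_diff_closed[OF fC l]] by simp
    qed
    have "W1 (l (2 * k + 1)) = hzero H" "W2 (l (2 * k + 2)) = hzero H" for k
      using bounded_op_kernel_closed[OF W1_bounded C[OF f[rule_format]] lC component]
        bounded_op_kernel_closed[OF W2_bounded C[OF f[rule_format]] lC component] f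
      by (auto simp: K_carrier_def odd_part_def even_part_def)
    then show ?thesis using l by (simp add: K_carrier_def odd_part_def even_part_def)
  qed
  show ?thesis
    unfolding closed_subspace_def
  proof (intro conjI ballI allI impI sub zero add scale)
    show "l \<in> K_carrier"
      if "\<forall>n. f n \<in> K_carrier" "l \<in> hcarrier (l2space H)" "hconverges (l2space H) f l" for f l
      using that by (rule lim)
  qed
qed

lemma K_chilbert: "chilbert K"
  unfolding K_def by (rule closed_subspace_chilbert[OF l2_chilbert K_closed_subspace])

definition alpha :: "'a \<Rightarrow> (nat \<Rightarrow> 'a) \<Rightarrow> nat \<Rightarrow> 'a" where
  "alpha h a k = (case k of 0 \<Rightarrow> P1 h | Suc j \<Rightarrow> hscale H (cnj q ^ k) (a j))"

definition y1 :: "'a \<Rightarrow> (nat \<Rightarrow> 'a) \<Rightarrow> (nat \<Rightarrow> 'a) \<Rightarrow> nat \<Rightarrow> 'a" where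
  "y1 h a b k = Q' (hadd H (hscale H (cnj q ^ k) (b k)) (V2 (alpha h a k)))"

definition U1 :: "(nat \<Rightarrow> 'a) \<Rightarrow> nat \<Rightarrow> 'a" where
  "U1 = on_parts (\<lambda>h a b. interleave (W1 h) (\<lambda>k. P1 (y1 h a b k)) (\<lambda>k. W1 (y1 h a b k)))"

lemma U1_interleave:
  "U1 (interleave h a b) = interleave (W1 h) (\<lambda>k. P1 (y1 h a b k)) (\<lambda>k. W1 (y1 h a b k))"
  by (simp add: U1_def)

lemma alpha_l2:
  assumes h: "h \<in> hcarrier H" and a: "a \<in> hcarrier (l2space H)"
  shows "alpha h a \<in> hcarrier (l2space H)"
proof -
  have "(\<lambda>k. alpha h a (Suc k)) = (\<lambda>k. hscale H (cnj q ^ Suc k) (a k))"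
    by (simp add: alpha_def)
  then show ?thesis
    using l2_unimodular_scale[OF a, of "\<lambda>k. cnj q ^ Suc k"] h
    by (subst l2_shift_iff) (simp add: alpha_def del: power_Suc)
qed

lemma alpha_closed: "h \<in> hcarrier H \<Longrightarrow> a \<in> hcarrier (l2space H) \<Longrightarrow> alpha h a k \<in> hcarrier H"
  using alpha_l2 by (simp add: l2space_carrier)

lemma W1_alpha:
  assumes "h \<in> hcarrier H" "a \<in> hcarrier (l2space H)" "\<And>k. W1 (a k) = hzero H"
  shows "W1 (alpha h a k) = hzero H"
  using assms by (cases k) (simp_all add: alpha_def l2space_carrier)

lemma y1_l2:
  assumes h: "h \<in> hcarrier H" and a: "a \<in> hcarrier (l2space H)" and b: "b \<in> hcarrier (l2space H)"
  shows "y1 h a b \<in> hcarrier (l2space H)"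
  using l2_map[OF Q'_bounded l2_add_closed[OF l2_unimodular_scale[OF b, of "\<lambda>k. cnj q ^ k"]
      l2_map[OF V2_bounded alpha_l2[OF h a]]]]
  by (simp add: y1_def[abs_def])

lemma U1_closed:
  assumes f: "f \<in> K_carrier"
  shows "U1 f \<in> K_carrier"
proof -
  obtain h a b where f_eq: "f = interleave h a b" and h: "h \<in> hcarrier H"
    and a: "a \<in> hcarrier (l2space H)" and b: "b \<in> hcarrier (l2space H)"
    and W1a: "\<And>k. W1 (a k) = hzero H" and W2b: "\<And>k. W2 (b k) = hzero H"
    using K_cases[OF f] by metis
  have Y: "y1 h a b \<in> hcarrier (l2space H)" using y1_l2[OF h a b] .
  then have YC: "y1 h a b k \<in> hcarrier H" for k by (simp add: l2space_carrier)
  have "W2 (W1 (y1 h a b k)) = hzero H" for k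
    using h a b W1a W2b alpha_closed[OF h a] W1_alpha[OF h a W1a]
    by (simp add: twisted y1_def l2space_carrier del: twisted_sym)
  then show ?thesis
    unfolding f_eq U1_interleave interleave_in_K
    using h YC l2_defect(1)[OF Y] l2_map[OF W1_bounded Y] by simp
qed

lemma y1_inner:
  assumes "h \<in> hcarrier H" "a \<in> hcarrier (l2space H)" "b \<in> hcarrier (l2space H)"
    and "h' \<in> hcarrier H" "a' \<in> hcarrier (l2space H)" "b' \<in> hcarrier (l2space H)"
    and "W2 (b k) = hzero H" "W2 (b' k) = hzero H"
  shows "hinner H (y1 h a b k) (y1 h' a' b' k)
    = hinner H (b k) (b' k) + hinner H (alpha h a k) (alpha h' a' k)"
  using assms alpha_closed[of h a k] alpha_closed[of h' a' k]
  by (simp add: y1_def l2space_carrier mult.assoc[symmetric])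

lemma inner_alpha:
  assumes "h \<in> hcarrier H" "a \<in> hcarrier (l2space H)" "h' \<in> hcarrier H" "a' \<in> hcarrier (l2space H)"
  shows "hinner (l2space H) (alpha h a) (alpha h' a') = hinner H (P1 h) (P1 h') + hinner (l2space H) a a'"
  using l2_inner_shift[OF alpha_l2 alpha_l2, of h a h' a'] assms
  by (simp add: alpha_def l2space_carrier del: power_Suc)

lemma U1_inner:
  assumes f: "f \<in> K_carrier" and g: "g \<in> K_carrier"
  shows "hinner K (U1 f) (U1 g) = hinner K f g"
proof -
  obtain h a b where f_eq: "f = interleave h a b" and h: "h \<in> hcarrier H"
    and a: "a \<in> hcarrier (l2space H)" and b: "b \<in> hcarrier (l2space H)"
    and W2b: "\<And>k. W2 (b k) = hzero H"
    using K_cases[OF f] by metis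
  obtain h' a' b' where g_eq: "g = interleave h' a' b'" and h': "h' \<in> hcarrier H"
    and a': "a' \<in> hcarrier (l2space H)" and b': "b' \<in> hcarrier (l2space H)"
    and W2b': "\<And>k. W2 (b' k) = hzero H"
    using K_cases[OF g] by metis
  let ?y = "y1 h a b" and ?y' = "y1 h' a' b'"
  have Y: "?y \<in> hcarrier (l2space H)" "?y' \<in> hcarrier (l2space H)"
    using y1_l2 h a b h' a' b' by blast+
  then have YC: "?y k \<in> hcarrier H" "?y' k \<in> hcarrier H" for k by (simp_all add: l2space_carrier)
  have "hinner K (U1 f) (U1 g) = hinner H (W1 h) (W1 h')
      + (hinner (l2space H) (\<lambda>k. P1 (?y k)) (\<lambda>k. P1 (?y' k)) + hinner (l2space H) (\<lambda>k. W1 (?y k)) (\<lambda>k. W1 (?y' k)))"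
    unfolding f_eq g_eq U1_interleave K_simps
    using l2_inner_interleave[OF bounded_op_closed[OF W1_bounded h] bounded_op_closed[OF W1_bounded h']
        l2_defect(1)[OF Y(1)] l2_defect(1)[OF Y(2)] l2_map[OF W1_bounded Y(1)] l2_map[OF W1_bounded Y(2)]]
    by (simp only: add.assoc)
  also have "\<dots> = hinner H (W1 h) (W1 h') + (hinner (l2space H) b b' + hinner (l2space H) (alpha h a) (alpha h' a'))"
    using l2_inner_eq_pointwise[OF l2_defect(1)[OF Y(1)] l2_defect(1)[OF Y(2)]
        l2_map[OF W1_bounded Y(1)] l2_map[OF W1_bounded Y(2)] b b' alpha_l2[OF h a] alpha_l2[OF h' a']]
      pythagoras_defect(1)[OF YC] y1_inner[OF h a b h' a' b' W2b W2b']
    by simp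
  also have "\<dots> = hinner H h h' + hinner (l2space H) a a' + hinner (l2space H) b b'"
    using inner_alpha[OF h a h' a'] pythagoras_defect(1)[OF h h'] by (simp add: algebra_simps)
  also have "\<dots> = hinner K f g"
    unfolding f_eq g_eq K_simps using l2_inner_interleave[OF h h' a a' b b'] by (simp only:)
  finally show ?thesis .
qed

definition join1 :: "(nat \<Rightarrow> 'a) \<Rightarrow> (nat \<Rightarrow> 'a) \<Rightarrow> nat \<Rightarrow> 'a" where
  "join1 a b k = hadd H (a k) (V1 (b k))"

definition U1_inv :: "(nat \<Rightarrow> 'a) \<Rightarrow> nat \<Rightarrow> 'a" where
  "U1_inv = on_parts (\<lambda>h a b. interleave (hadd H (V1 h) (W2 (Q (join1 a b 0))))
     (\<lambda>k. hscale H (q ^ Suc k) (W2 (Q (join1 a b (Suc k))))) (\<lambda>k. hscale H (q ^ k) (P2 (Q (join1 a b k)))))"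

lemma join1_l2:
  assumes "a \<in> hcarrier (l2space H)" "b \<in> hcarrier (l2space H)"
  shows "join1 a b \<in> hcarrier (l2space H)"
  using l2_add_closed[OF assms(1) l2_map[OF V1_bounded assms(2)]] by (simp add: join1_def[abs_def])

lemma U1_inv_closed:
  assumes g: "g \<in> K_carrier"
  shows "U1_inv g \<in> K_carrier"
proof -
  obtain h a b where g_eq: "g = interleave h a b" and h: "h \<in> hcarrier H"
    and a: "a \<in> hcarrier (l2space H)" and b: "b \<in> hcarrier (l2space H)"
    and W1a: "\<And>k. W1 (a k) = hzero H" and W2b: "\<And>k. W2 (b k) = hzero H"
    using K_cases[OF g] by metis
  have X: "(\<lambda>k. Q (join1 a b k)) \<in> hcarrier (l2space H)" using l2_map[OF Q_bounded join1_l2[OF a b]] .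
  then have XC: "Q (join1 a b k) \<in> hcarrier H" for k by (simp add: l2space_carrier)
  have "(\<lambda>k. hscale H (q ^ Suc k) (W2 (Q (join1 a b (Suc k))))) \<in> hcarrier (l2space H)"
    using l2_shift_iff[THEN iffD1, OF l2_unimodular_scale[OF l2_map[OF W2_bounded X], of "\<lambda>k. q ^ k"]]
    by simp
  moreover have "(\<lambda>k. hscale H (q ^ k) (P2 (Q (join1 a b k)))) \<in> hcarrier (l2space H)"
    using l2_unimodular_scale[OF l2_defect(2)[OF X], of "\<lambda>k. q ^ k"] by simp
  moreover have "W1 (W2 (Q (join1 a b k))) = hzero H" for k
    using a b W1a W2b by (simp add: join1_def l2space_carrier)
  ultimately show ?thesis
    unfolding g_eq U1_inv_def on_parts_interleave interleave_in_K using h XC by simp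
qed

lemma U1_U1_inv:
  assumes g: "g \<in> K_carrier"
  shows "U1 (U1_inv g) = g"
proof -
  obtain h a b where g_eq: "g = interleave h a b" and h: "h \<in> hcarrier H"
    and a: "a \<in> hcarrier (l2space H)" and b: "b \<in> hcarrier (l2space H)"
    and W1a: "\<And>k. W1 (a k) = hzero H" and W2b: "\<And>k. W2 (b k) = hzero H"
    using K_cases[OF g] by metis
  have aC: "a k \<in> hcarrier H" and bC: "b k \<in> hcarrier H" for k
    using a b by (simp_all add: l2space_carrier)
  let ?h = "hadd H (V1 h) (W2 (Q (join1 a b 0)))"
    and ?a = "\<lambda>k. hscale H (q ^ Suc k) (W2 (Q (join1 a b (Suc k))))"
    and ?b = "\<lambda>k. hscale H (q ^ k) (P2 (Q (join1 a b k)))"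
  have y: "y1 ?h ?a ?b k = join1 a b k" for k
    using h aC bC W1a W2b by (cases k) (auto intro!: vector_eqI simp: y1_def alpha_def join1_def algebra_simps)
  show ?thesis
    unfolding g_eq U1_inv_def on_parts_interleave U1_interleave y interleave_eq_iff
    using h aC bC W1a W2b by (auto intro!: vector_eqI simp: join1_def)
qed

definition beta :: "'a \<Rightarrow> (nat \<Rightarrow> 'a) \<Rightarrow> (nat \<Rightarrow> 'a) \<Rightarrow> nat \<Rightarrow> 'a" where
  "beta h a b k = (case k of 0 \<Rightarrow> P2 h | Suc j \<Rightarrow> hscale H (q ^ j) (P2 (Q (join1 a b j))))"

definition U2 :: "(nat \<Rightarrow> 'a) \<Rightarrow> nat \<Rightarrow> 'a" where
  "U2 = on_parts (\<lambda>h a b. interleave (W2 h) (\<lambda>k. hscale H (q ^ k) (W2 (Q (join1 a b k)))) (beta h a b))"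

lemma U2_interleave:
  "U2 (interleave h a b) = interleave (W2 h) (\<lambda>k. hscale H (q ^ k) (W2 (Q (join1 a b k)))) (beta h a b)"
  by (simp add: U2_def)

lemma beta_l2:
  assumes h: "h \<in> hcarrier H" and a: "a \<in> hcarrier (l2space H)" and b: "b \<in> hcarrier (l2space H)"
  shows "beta h a b \<in> hcarrier (l2space H)"
  using l2_unimodular_scale[OF l2_defect(2)[OF l2_map[OF Q_bounded join1_l2[OF a b]]], of "\<lambda>k. q ^ k"] h
  by (subst l2_shift_iff) (simp add: beta_def)

lemma U2_closed:
  assumes f: "f \<in> K_carrier"
  shows "U2 f \<in> K_carrier"
proof -
  obtain h a b where f_eq: "f = interleave h a b" and h: "h \<in> hcarrier H"
    and a: "a \<in> hcarrier (l2space H)" and b: "b \<in> hcarrier (l2space H)"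
    and W1a: "\<And>k. W1 (a k) = hzero H" and W2b: "\<And>k. W2 (b k) = hzero H"
    using K_cases[OF f] by metis
  have X: "(\<lambda>k. Q (join1 a b k)) \<in> hcarrier (l2space H)" using l2_map[OF Q_bounded join1_l2[OF a b]] .
  then have XC: "Q (join1 a b k) \<in> hcarrier H" for k by (simp add: l2space_carrier)
  have "beta h a b k \<in> hcarrier H" "W2 (beta h a b k) = hzero H" for k
    using h XC by (cases k; simp add: beta_def)+
  moreover have "W1 (W2 (Q (join1 a b k))) = hzero H" for k
    using a b W1a W2b by (simp add: join1_def l2space_carrier)
  ultimately show ?thesis
    unfolding f_eq U2_interleave interleave_in_K
    using h XC beta_l2[OF h a b] l2_unimodular_scale[OF l2_map[OF W2_bounded X], of "\<lambda>k. q ^ k"]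
    by simp
qed

lemma U2_inner:
  assumes f: "f \<in> K_carrier" and g: "g \<in> K_carrier"
  shows "hinner K (U2 f) (U2 g) = hinner K f g"
proof -
  obtain h a b where f_eq: "f = interleave h a b" and h: "h \<in> hcarrier H"
    and a: "a \<in> hcarrier (l2space H)" and b: "b \<in> hcarrier (l2space H)"
    and W1a: "\<And>k. W1 (a k) = hzero H"
    using K_cases[OF f] by metis
  obtain h' a' b' where g_eq: "g = interleave h' a' b'" and h': "h' \<in> hcarrier H"
    and a': "a' \<in> hcarrier (l2space H)" and b': "b' \<in> hcarrier (l2space H)"
    and W1a': "\<And>k. W1 (a' k) = hzero H"
    using K_cases[OF g] by metis
  let ?x = "\<lambda>k. Q (join1 a b k)" and ?x' = "\<lambda>k. Q (join1 a' b' k)"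
  have X: "?x \<in> hcarrier (l2space H)" "?x' \<in> hcarrier (l2space H)"
    using l2_map[OF Q_bounded join1_l2] a b a' b' by blast+
  let ?A = "\<lambda>k. hscale H (q ^ k) (W2 (?x k))" and ?A' = "\<lambda>k. hscale H (q ^ k) (W2 (?x' k))"
  let ?B = "\<lambda>k. hscale H (q ^ k) (P2 (?x k))" and ?B' = "\<lambda>k. hscale H (q ^ k) (P2 (?x' k))"
  have A: "?A \<in> hcarrier (l2space H)" "?A' \<in> hcarrier (l2space H)"
    using l2_unimodular_scale[OF l2_map[OF W2_bounded X(1)]] l2_unimodular_scale[OF l2_map[OF W2_bounded X(2)]]
    by simp_all
  have B: "?B \<in> hcarrier (l2space H)" "?B' \<in> hcarrier (l2space H)"
    using l2_unimodular_scale[OF l2_defect(2)[OF X(1)]] l2_unimodular_scale[OF l2_defect(2)[OF X(2)]]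
    by simp_all
  have beta: "hinner (l2space H) (beta h a b) (beta h' a' b') = hinner H (P2 h) (P2 h') + hinner (l2space H) ?B ?B'"
    using l2_inner_shift[OF beta_l2[OF h a b] beta_l2[OF h' a' b']] by (simp add: beta_def)
  have "hinner K (U2 f) (U2 g) = hinner H (W2 h) (W2 h') + hinner H (P2 h) (P2 h')
      + (hinner (l2space H) ?A ?A' + hinner (l2space H) ?B ?B')"
    unfolding f_eq g_eq U2_interleave K_simps
    using l2_inner_interleave[OF bounded_op_closed[OF W2_bounded h] bounded_op_closed[OF W2_bounded h']
        A beta_l2[OF h a b] beta_l2[OF h' a' b']] beta
    by (simp only: ac_simps)
  also have "\<dots> = hinner H h h' + (hinner (l2space H) a a' + hinner (l2space H) b b')"
  proof -
    have "hinner H (?A k) (?A' k) + hinner H (?B k) (?B' k) = hinner H (a k) (a' k) + hinner H (b k) (b' k)" for k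
    proof -
      have xC: "join1 a b k \<in> hcarrier H" "join1 a' b' k \<in> hcarrier H"
        using join1_l2 a b a' b' by (simp_all add: l2space_carrier)
      have "hinner H (?A k) (?A' k) + hinner H (?B k) (?B' k)
          = hinner H (P2 (?x k)) (P2 (?x' k)) + hinner H (W2 (?x k)) (W2 (?x' k))"
        using xC by simp
      also have "\<dots> = hinner H (join1 a b k) (join1 a' b' k)"
        using pythagoras_defect(2)[of "?x k" "?x' k"] xC by simp
      also have "\<dots> = hinner H (a k) (a' k) + hinner H (b k) (b' k)"
        using a b a' b' W1a W1a' by (simp add: join1_def l2space_carrier)
      finally show ?thesis .
    qed
    then show ?thesis
      using l2_inner_eq_pointwise[OF A B a a' b b'] pythagoras_defect(2)[OF h h'] by (simp add: ac_simps)
  qed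
  also have "\<dots> = hinner K f g"
    unfolding f_eq g_eq K_simps using l2_inner_interleave[OF h h' a a' b b'] by (simp only: ac_simps)
  finally show ?thesis .
qed

definition z2 :: "(nat \<Rightarrow> 'a) \<Rightarrow> (nat \<Rightarrow> 'a) \<Rightarrow> nat \<Rightarrow> 'a" where
  "z2 a b k = hscale H (cnj q ^ k) (Q' (hadd H (b (Suc k)) (V2 (a k))))"

definition U2_inv :: "(nat \<Rightarrow> 'a) \<Rightarrow> nat \<Rightarrow> 'a" where
  "U2_inv = on_parts (\<lambda>h a b. interleave (hadd H (V2 h) (b 0)) (\<lambda>k. P1 (z2 a b k)) (\<lambda>k. W1 (z2 a b k)))"

lemma z2_l2:
  assumes "a \<in> hcarrier (l2space H)" "b \<in> hcarrier (l2space H)"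
  shows "z2 a b \<in> hcarrier (l2space H)"
  using l2_unimodular_scale[OF l2_map[OF Q'_bounded l2_add_closed[OF l2_shift_iff[THEN iffD1, OF assms(2), THEN conjunct2]
      l2_map[OF V2_bounded assms(1)]]], of "\<lambda>k. cnj q ^ k"]
  by (simp add: z2_def[abs_def])

lemma U2_inv_closed:
  assumes g: "g \<in> K_carrier"
  shows "U2_inv g \<in> K_carrier"
proof -
  obtain h a b where g_eq: "g = interleave h a b" and h: "h \<in> hcarrier H"
    and a: "a \<in> hcarrier (l2space H)" and b: "b \<in> hcarrier (l2space H)"
    and W1a: "\<And>k. W1 (a k) = hzero H" and W2b: "\<And>k. W2 (b k) = hzero H"
    using K_cases[OF g] by metis
  have Z: "z2 a b \<in> hcarrier (l2space H)" using z2_l2[OF a b] .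
  then have ZC: "z2 a b k \<in> hcarrier H" for k by (simp add: l2space_carrier)
  have "W2 (W1 (z2 a b k)) = hzero H" for k
    using a b W1a W2b by (simp add: twisted z2_def l2space_carrier del: twisted_sym)
  then show ?thesis
    unfolding g_eq U2_inv_def on_parts_interleave interleave_in_K
    using h b ZC l2_defect(1)[OF Z] l2_map[OF W1_bounded Z] by (simp add: l2space_carrier)
qed

lemma U2_U2_inv:
  assumes g: "g \<in> K_carrier"
  shows "U2 (U2_inv g) = g"
proof -
  obtain h a b where g_eq: "g = interleave h a b" and h: "h \<in> hcarrier H"
    and a: "a \<in> hcarrier (l2space H)" and b: "b \<in> hcarrier (l2space H)"
    and W1a: "\<And>k. W1 (a k) = hzero H" and W2b: "\<And>k. W2 (b k) = hzero H"
    using K_cases[OF g] by metis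
  have aC: "a k \<in> hcarrier H" and bC: "b k \<in> hcarrier H" for k
    using a b by (simp_all add: l2space_carrier)
  have x: "join1 (\<lambda>k. P1 (z2 a b k)) (\<lambda>k. W1 (z2 a b k)) k = z2 a b k" for k
    using aC bC by (intro vector_eqI) (simp_all add: join1_def z2_def)
  have "beta (hadd H (V2 h) (b 0)) (\<lambda>k. P1 (z2 a b k)) (\<lambda>k. W1 (z2 a b k)) k = b k" for k
    unfolding beta_def x
    using h aC bC W2b by (cases k) (auto intro!: vector_eqI simp: z2_def distrib_left)
  then show ?thesis
    unfolding g_eq U2_inv_def on_parts_interleave U2_interleave x interleave_eq_iff
    using h aC bC W2b by (auto intro!: vector_eqI simp: z2_def mult.assoc[symmetric])
qed

definition Qbar :: "(nat \<Rightarrow> 'a) \<Rightarrow> nat \<Rightarrow> 'a" where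
  "Qbar = on_parts (\<lambda>h a b. interleave (Q h) (\<lambda>k. hscale H q (a k)) (\<lambda>k. hscale H q (b k)))"

definition Qbar_inv :: "(nat \<Rightarrow> 'a) \<Rightarrow> nat \<Rightarrow> 'a" where
  "Qbar_inv = on_parts (\<lambda>h a b. interleave (Q' h) (\<lambda>k. hscale H (cnj q) (a k)) (\<lambda>k. hscale H (cnj q) (b k)))"

lemma Qbar_interleave: "Qbar (interleave h a b) = interleave (Q h) (\<lambda>k. hscale H q (a k)) (\<lambda>k. hscale H q (b k))"
  by (simp add: Qbar_def)

lemma Qbar_closed:
  assumes f: "f \<in> K_carrier"
  shows "Qbar f \<in> K_carrier"
proof -
  obtain h a b where f_eq: "f = interleave h a b" and h: "h \<in> hcarrier H"
    and a: "a \<in> hcarrier (l2space H)" and b: "b \<in> hcarrier (l2space H)"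
    and W1a: "\<And>k. W1 (a k) = hzero H" and W2b: "\<And>k. W2 (b k) = hzero H"
    using K_cases[OF f] by metis
  show ?thesis
    unfolding f_eq Qbar_interleave interleave_in_K
    using h a b W1a W2b l2_scale_closed[OF a, of q] l2_scale_closed[OF b, of q]
    by (simp add: l2space_carrier)
qed

lemma Qbar_inner:
  assumes f: "f \<in> K_carrier" and g: "g \<in> K_carrier"
  shows "hinner K (Qbar f) (Qbar g) = hinner K f g"
proof -
  obtain h a b where f_eq: "f = interleave h a b" and h: "h \<in> hcarrier H"
    and a: "a \<in> hcarrier (l2space H)" and b: "b \<in> hcarrier (l2space H)"
    using K_cases[OF f] by metis
  obtain h' a' b' where g_eq: "g = interleave h' a' b'" and h': "h' \<in> hcarrier H"
    and a': "a' \<in> hcarrier (l2space H)" and b': "b' \<in> hcarrier (l2space H)"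
    using K_cases[OF g] by metis
  show ?thesis
    unfolding f_eq g_eq Qbar_interleave K_simps
    using l2_inner_interleave[OF bounded_op_closed[OF Q_bounded h] bounded_op_closed[OF Q_bounded h']
        l2_scale_closed[OF a, of q] l2_scale_closed[OF a', of q] l2_scale_closed[OF b, of q]
        l2_scale_closed[OF b', of q]]
      l2_inner_interleave[OF h h' a a' b b'] h h' a a' b b'
    by (simp add: l2space_carrier mult.assoc[symmetric])
qed

lemma Qbar_inv_closed:
  assumes g: "g \<in> K_carrier"
  shows "Qbar_inv g \<in> K_carrier"
proof -
  obtain h a b where g_eq: "g = interleave h a b" and h: "h \<in> hcarrier H"
    and a: "a \<in> hcarrier (l2space H)" and b: "b \<in> hcarrier (l2space H)"
    and W1a: "\<And>k. W1 (a k) = hzero H" and W2b: "\<And>k. W2 (b k) = hzero H"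
    using K_cases[OF g] by metis
  show ?thesis
    unfolding g_eq Qbar_inv_def on_parts_interleave interleave_in_K
    using h a b W1a W2b l2_scale_closed[OF a, of "cnj q"] l2_scale_closed[OF b, of "cnj q"]
    by (simp add: l2space_carrier)
qed

lemma Qbar_Qbar_inv:
  assumes g: "g \<in> K_carrier"
  shows "Qbar (Qbar_inv g) = g"
proof -
  obtain h a b where g_eq: "g = interleave h a b" and h: "h \<in> hcarrier H"
    and a: "a \<in> hcarrier (l2space H)" and b: "b \<in> hcarrier (l2space H)"
    using K_cases[OF g] by metis
  show ?thesis
    unfolding g_eq Qbar_inv_def on_parts_interleave Qbar_interleave interleave_eq_iff
    using h a b by (simp add: l2space_carrier fun_eq_iff)
qed

text \<open>Both sides of the twisted commutation relation equal the following shift.\<close>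

definition shift :: "(nat \<Rightarrow> 'a) \<Rightarrow> nat \<Rightarrow> 'a" where
  "shift = on_parts (\<lambda>h a b. interleave (W2 (W1 h)) (case_nat (P1 h) a) (case_nat (P2 (W1 h)) b))"

lemma defect_decomposition: "v \<in> hcarrier H \<Longrightarrow> hadd H (P1 v) (V1 (W1 v)) = v"
  by (intro vector_eqI) simp_all

lemma defect_twist:
  assumes h: "h \<in> hcarrier H"
  shows "Q' (hadd H (P2 (Q h)) (V2 (P1 (W2 (Q h))))) = hadd H (P1 h) (V1 (P2 (W1 h)))"
  using h by (intro vector_eqI) (simp_all add: algebra_simps)

lemma U2_U1:
  assumes f: "f \<in> K_carrier"
  shows "U2 (U1 f) = shift f"
proof -
  obtain h a b where f_eq: "f = interleave h a b" and h: "h \<in> hcarrier H"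
    and a: "a \<in> hcarrier (l2space H)" and b: "b \<in> hcarrier (l2space H)"
    and W1a: "\<And>k. W1 (a k) = hzero H" and W2b: "\<And>k. W2 (b k) = hzero H"
    using K_cases[OF f] by metis
  have aC: "a k \<in> hcarrier H" and bC: "b k \<in> hcarrier H" and yC: "y1 h a b k \<in> hcarrier H" for k
    using a b y1_l2[OF h a b] by (simp_all add: l2space_carrier)
  have x: "join1 (\<lambda>k. P1 (y1 h a b k)) (\<lambda>k. W1 (y1 h a b k)) k = y1 h a b k" for k
    unfolding join1_def using defect_decomposition[OF yC] .
  have "(\<lambda>k. hscale H (q ^ k) (W2 (Q (y1 h a b k)))) = case_nat (P1 h) a"
  proof
    show "hscale H (q ^ k) (W2 (Q (y1 h a b k))) = case_nat (P1 h) a k" for k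
      using h aC bC W2b by (cases k) (simp_all add: y1_def alpha_def del: power_Suc)
  qed
  moreover have "beta (W1 h) (\<lambda>k. P1 (y1 h a b k)) (\<lambda>k. W1 (y1 h a b k)) = case_nat (P2 (W1 h)) b"
  proof
    show "beta (W1 h) (\<lambda>k. P1 (y1 h a b k)) (\<lambda>k. W1 (y1 h a b k)) k = case_nat (P2 (W1 h)) b k" for k
      unfolding beta_def x using h aC bC W2b alpha_closed[OF h a]
      by (cases k) (auto intro!: vector_eqI simp: y1_def)
  qed
  ultimately show ?thesis
    unfolding f_eq U1_interleave U2_interleave shift_def on_parts_interleave x by simp
qed

lemma U1_U2_Qbar:
  assumes f: "f \<in> K_carrier"
  shows "U1 (U2 (Qbar f)) = shift f"
proof -
  obtain h a b where f_eq: "f = interleave h a b" and h: "h \<in> hcarrier H"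
    and a: "a \<in> hcarrier (l2space H)" and b: "b \<in> hcarrier (l2space H)"
    and W1a: "\<And>k. W1 (a k) = hzero H" and W2b: "\<And>k. W2 (b k) = hzero H"
    using K_cases[OF f] by metis
  have aC: "a k \<in> hcarrier H" and bC: "b k \<in> hcarrier H" for k
    using a b by (simp_all add: l2space_carrier)
  let ?a = "\<lambda>k. hscale H (q ^ k) (W2 (Q (join1 (\<lambda>k. hscale H q (a k)) (\<lambda>k. hscale H q (b k)) k)))"
    and ?b = "beta (Q h) (\<lambda>k. hscale H q (a k)) (\<lambda>k. hscale H q (b k))"
  have y: "y1 (W2 (Q h)) ?a ?b k = (case k of 0 \<Rightarrow> hadd H (P1 h) (V1 (P2 (W1 h))) | Suc j \<Rightarrow> join1 a b j)" for k
  proof (cases k)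
    case 0
    then show ?thesis using defect_twist[OF h] h by (simp add: y1_def alpha_def beta_def)
  next
    case (Suc j)
    have qq: "cnj q * cnj q ^ j * q ^ j * (q * z) = z" for z
    proof -
      have "cnj q * cnj q ^ j * q ^ j * (q * z) = (cnj q * q) * (cnj q ^ j * q ^ j) * z"
        by (simp only: ac_simps)
      then show ?thesis by simp
    qed
    show ?thesis
      using Suc aC bC
      by (auto intro!: vector_eqI simp: y1_def alpha_def beta_def join1_def distrib_left right_diff_distrib qq)
  qed
  let ?y = "\<lambda>k. case k of 0 \<Rightarrow> hadd H (P1 h) (V1 (P2 (W1 h))) | Suc j \<Rightarrow> join1 a b j"
  have "(\<lambda>k. P1 (?y k)) = case_nat (P1 h) a"
  proof
    show "P1 (?y k) = case_nat (P1 h) a k" for k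
      using h aC bC W1a by (cases k) (auto intro!: vector_eqI simp: join1_def)
  qed
  moreover have "(\<lambda>k. W1 (?y k)) = case_nat (P2 (W1 h)) b"
  proof
    show "W1 (?y k) = case_nat (P2 (W1 h)) b k" for k
      using h aC bC W1a by (cases k) (simp_all add: join1_def)
  qed
  ultimately show ?thesis
    unfolding f_eq Qbar_interleave U2_interleave U1_interleave shift_def on_parts_interleave y
      interleave_eq_iff
    using h by simp
qed

lemma twisted_commutation: "f \<in> K_carrier \<Longrightarrow> U2 (U1 f) = U1 (U2 (Qbar f))"
  using U2_U1 U1_U2_Qbar by simp

lemma K_unitaryI:
  assumes "\<And>f. f \<in> K_carrier \<Longrightarrow> U f \<in> K_carrier"
    and "\<And>f g. f \<in> K_carrier \<Longrightarrow> g \<in> K_carrier \<Longrightarrow> hinner K (U f) (U g) = hinner K f g"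
    and "\<And>g. g \<in> K_carrier \<Longrightarrow> S g \<in> K_carrier" and "\<And>g. g \<in> K_carrier \<Longrightarrow> U (S g) = g"
  shows "unitary_op K U"
  using chilbert.unitary_opI[OF K_chilbert, of U S] assms by simp

lemma U1_unitary: "unitary_op K U1"
  using U1_closed U1_inner U1_inv_closed U1_U1_inv by (rule K_unitaryI)

lemma U2_unitary: "unitary_op K U2"
  using U2_closed U2_inner U2_inv_closed U2_U2_inv by (rule K_unitaryI)

lemma Qbar_unitary: "unitary_op K Qbar"
  using Qbar_closed Qbar_inner Qbar_inv_closed Qbar_Qbar_inv by (rule K_unitaryI)

definition J :: "'a \<Rightarrow> nat \<Rightarrow> 'a" where
  "J h = interleave h (\<lambda>_. hzero H) (\<lambda>_. hzero H)"

lemma J_closed: "h \<in> hcarrier H \<Longrightarrow> J h \<in> K_carrier"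
  unfolding J_def interleave_in_K by (simp add: l2space_carrier)

lemma inner_J:
  assumes h: "h \<in> hcarrier H" and f: "f \<in> K_carrier"
  shows "hinner K (J h) f = hinner H h (f 0)"
proof -
  obtain h' a b where "f = interleave h' a b" "h' \<in> hcarrier H"
    "a \<in> hcarrier (l2space H)" "b \<in> hcarrier (l2space H)"
    using K_cases[OF f] by metis
  then show ?thesis
    unfolding J_def K_simps
    using l2_inner_interleave[OF h, of h' "\<lambda>_. hzero H" a "\<lambda>_. hzero H" b] h
    by (simp add: l2space_carrier)
qed

lemma J_isometric_embedding: "isometric_embedding H K J"
proof -
  have "J (hadd H x y) = hadd K (J x) (J y)" if "x \<in> hcarrier H" "y \<in> hcarrier H" for x y
    unfolding J_def K_simps l2space_simps map2_interleave[of "hadd H"] by simp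
  moreover have "J (hscale H a x) = hscale K a (J x)" for a x
    unfolding J_def K_simps l2space_simps map_interleave[of "hscale H a"] by simp
  ultimately show ?thesis
    unfolding isometric_embedding_def using J_closed inner_J J_closed by (simp add: J_def)
qed

lemma orth_J_iff:
  assumes f: "f \<in> K_carrier"
  shows "orth_to K (J ` hcarrier H) f \<longleftrightarrow> f 0 = hzero H"
proof -
  have f0: "f 0 \<in> hcarrier H" using f by (auto simp: K_carrier_def l2space_carrier)
  have "orth_to K (J ` hcarrier H) f \<longleftrightarrow> (\<forall>h\<in>hcarrier H. hinner H h (f 0) = 0)"
    unfolding orth_to_def using inner_J f by auto
  also have "\<dots> \<longleftrightarrow> f 0 = hzero H"
    using f0 inner_self_eq_zero by auto
  finally show ?thesis .
qed

lemma compressionI: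
  assumes closed: "\<And>f. f \<in> K_carrier \<Longrightarrow> F f \<in> K_carrier"
    and zeroth: "\<And>f. f \<in> K_carrier \<Longrightarrow> F f 0 = T (f 0)"
  shows "compression H K J F T"
  unfolding compression_def
  using inner_J closed zeroth J_closed by (simp add: J_def)

lemma liftingI:
  assumes T: "bounded_op H T" and closed: "\<And>f. f \<in> K_carrier \<Longrightarrow> F f \<in> K_carrier"
    and zeroth: "\<And>f. f \<in> K_carrier \<Longrightarrow> F f 0 = T (f 0)"
  shows "lifting H K J F T"
proof -
  have "compression H K J F T" using closed zeroth by (rule compressionI)
  then show ?thesis
    unfolding lifting_def using orth_J_iff closed zeroth bounded_op_zero[OF T] by simp
qed

lemma U1_zeroth: "U1 f 0 = W1 (f 0)" and U2_zeroth: "U2 f 0 = W2 (f 0)" and Qbar_zeroth: "Qbar f 0 = Q (f 0)"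
  by (simp_all add: U1_def U2_def Qbar_def on_parts_def)

lemma funpow_closed: "(\<And>f. f \<in> K_carrier \<Longrightarrow> F f \<in> K_carrier) \<Longrightarrow> f \<in> K_carrier \<Longrightarrow> (F ^^ n) f \<in> K_carrier"
  by (induction n) auto

lemma funpow_U1_zeroth: "(U1 ^^ n) f 0 = (W1 ^^ n) (f 0)"
  by (induction n) (simp_all add: U1_zeroth)

lemma funpow_U2_zeroth: "(U2 ^^ n) f 0 = (W2 ^^ n) (f 0)"
  by (induction n) (simp_all add: U2_zeroth)

lemma U1_lifting: "lifting H K J U1 W1"
  by (rule liftingI) (simp_all add: W1_bounded U1_closed U1_zeroth)

lemma U2_lifting: "lifting H K J U2 W2"
  by (rule liftingI) (simp_all add: W2_bounded U2_closed U2_zeroth)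

lemma compression_powers:
  "compression H K J ((U1 ^^ n) \<circ> (U2 ^^ m)) ((W1 ^^ n) \<circ> (W2 ^^ m))"
  "compression H K J ((U2 ^^ n) \<circ> (U1 ^^ m)) ((W2 ^^ n) \<circ> (W1 ^^ m))"
proof -
  note closed = funpow_closed[of U1] funpow_closed[of U2] U1_closed U2_closed
  note zeroth = funpow_U1_zeroth funpow_U2_zeroth
  show "compression H K J ((U1 ^^ n) \<circ> (U2 ^^ m)) ((W1 ^^ n) \<circ> (W2 ^^ m))"
    by (rule compressionI) (simp_all add: closed zeroth)
  show "compression H K J ((U2 ^^ n) \<circ> (U1 ^^ m)) ((W2 ^^ n) \<circ> (W1 ^^ m))"
    by (rule compressionI) (simp_all add: closed zeroth)
qed

lemma Qbar_J: "h \<in> hcarrier H \<Longrightarrow> Qbar (J h) = J (Q h)"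
  by (simp add: J_def Qbar_interleave)

lemma Qbar_orth:
  assumes f: "f \<in> K_carrier" and "orth_to K (J ` hcarrier H) f"
  shows "Qbar f = hscale K q f"
proof -
  have "f 0 = hzero H" using assms orth_J_iff by blast
  moreover obtain h a b where "f = interleave h a b" using K_cases[OF f] by metis
  ultimately show ?thesis by (simp add: Qbar_interleave map_interleave)
qed

lemma Qbar_reduces: "reduces K (J ` hcarrier H) Qbar"
  unfolding reduces_def
  using Qbar_J J_closed Qbar_closed orth_J_iff Qbar_zeroth by auto

end

theorem mainTheorem12:
  fixes H :: "'a chspace" and W1 W2 Q :: "'a \<Rightarrow> 'a" and q :: complex
  assumes "complex_hilbert_space H"
    and "coisometry H W1" and "coisometry H W2" and "unitary_op H Q"
    and "\<forall>h\<in>hcarrier H. W2 (W1 h) = W1 (W2 (Q h))"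
    and "cmod q = 1"
  shows "\<exists>(K :: (nat \<Rightarrow> 'a) chspace) J Qb U1 U2.
    complex_hilbert_space K \<and> isometric_embedding H K J \<and>
    unitary_op K Qb \<and> unitary_op K U1 \<and> unitary_op K U2 \<and>
    reduces K (J ` hcarrier H) Qb \<and>
    (\<forall>h\<in>hcarrier H. Qb (J h) = J (Q h)) \<and>
    (\<forall>k\<in>hcarrier K. orth_to K (J ` hcarrier H) k \<longrightarrow> Qb k = hscale K q k) \<and>
    (\<forall>k\<in>hcarrier K. U2 (U1 k) = U1 (U2 (Qb k))) \<and>
    lifting H K J U1 W1 \<and> lifting H K J U2 W2 \<and>
    (\<forall>n m. compression H K J ((U1 ^^ n) \<circ> (U2 ^^ m)) ((W1 ^^ n) \<circ> (W2 ^^ m)) \<and>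
           compression H K J ((U2 ^^ n) \<circ> (U1 ^^ m)) ((W2 ^^ n) \<circ> (W1 ^^ m)))"
proof -
  interpret twisted_coisometries H W1 W2 Q q
    using assms by (intro twisted_coisometries.intro twisted_coisometries_axioms.intro)
      (simp_all add: complex_hilbert_space_iff_chilbert)
  have "complex_hilbert_space K" using K_chilbert by (simp add: complex_hilbert_space_iff_chilbert)
  then show ?thesis
    using J_isometric_embedding Qbar_unitary U1_unitary U2_unitary Qbar_reduces Qbar_J Qbar_orth
      twisted_commutation U1_lifting U2_lifting compression_powers
    by (intro exI[of _ K] exI[of _ J] exI[of _ Qbar] exI[of _ U1] exI[of _ U2]) simp
qed

end
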